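(* Assume the Standing Setting. Then (i) for every $k\in\mathbb{N}\cap(Hd+H,\mathfrak d]$ the map $\mathbb{R}^{\mathfrak d}\ni\theta\mapsto\mathcal G_k(\theta)\in\mathbb{R}$ is locally Lipschitz continuous; (ii) for every $i\in\{1,\dots,H\}$, $j\in\{1,\dots,d\}$ the map $\{\vartheta\in\mathbb{R}^{\mathfrak d}\colon i\notin\mathbf D^\vartheta\}\ni\theta\mapsto\mathcal G_{(i-1)d+j}(\theta)\in\mathbb{R}$ is locally Lipschitz continuous; and (iii) for every $i\in\{1,\dots,H\}$ the map $\{\vartheta\in\mathbb{R}^{\mathfrak d}\colon i\notin\mathbf D^\vartheta\}\ni\theta\mapsto\mathcal G_{Hd+i}(\theta)\in\mathbb{R}$ is locally Lipschitz continuous.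
   Context: Standing Setting: Let $d,H,\mathfrak d\in\mathbb{N}$ with $\mathfrak d=dH+2H+1$, let $a\in\mathbb{R}$, $b\in(a,\infty)$, $f\in C([a,b]^d,\mathbb{R})$, and let $p\colon[a,b]^d\to[0,\infty)$ be bounded and measurable. Let $\lambda$ be Lebesgue measure on $\mathbb{R}^d$ and $\|\cdot\|$ the Euclidean norm. For $\theta=(\theta_1,\dots,\theta_{\mathfrak d})\in\mathbb{R}^{\mathfrak d}$, $i\in\{1,\dots,H\}$, $j\in\{1,\dots,d\}$ write $w^\theta_{i,j}=\theta_{(i-1)d+j}$, $b^\theta_i=\theta_{Hd+i}$, $v^\theta_i=\theta_{H(d+1)+i}$, $c^\theta=\theta_{\mathfrak d}$. Define $\mathcal N^\theta(x)=c^\theta+\sum_{i=1}^H v^\theta_i\max\{b^\theta_i+\sum_{j=1}^d w^\theta_{i,j}x_j,0\}$ for $x\in\mathbb{R}^d$ and the risk $\mathcal L(\theta)=\int_{[a,b]^d}(f(y)-\mathcal N^\theta(y))^2p(y)\,\lambda(\mathrm{d}y)$. Let $\mathfrak R_r\in C^1(\mathbb{R},\mathbb{R})$, $r\in\mathbb{N}$, satisfy for all $x\in\mathbb{R}$ that $\lim_{r\to\infty}\big(|\mathfrak R_r(x)-\max\{x,0\}|+|(\mathfrak R_r)'(x)-\mathbb 1_{(0,\infty)}(x)|\big)=0$ and $\sup_{r\in\mathbb{N}}\sup_{y\in[-|x|,|x|]}|(\mathfrak R_r)'(y)|<\infty$, and let $\mathfrak L_r(\theta)=\int_{[a,b]^d}\big(f(y)-c^\theta-\sum_{i=1}^H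 v^\theta_i\,\mathfrak R_r(b^\theta_i+\sum_{j=1}^d w^\theta_{i,j}y_j)\big)^2p(y)\,\lambda(\mathrm{d}y)$. Let $\mathcal G=(\mathcal G_1,\dots,\mathcal G_{\mathfrak d})\colon\mathbb{R}^{\mathfrak d}\to\mathbb{R}^{\mathfrak d}$ satisfy $\mathcal G(\theta)=\lim_{r\to\infty}(\nabla\mathfrak L_r)(\theta)$ for every $\theta$ at which this limit exists. For $\theta\in\mathbb{R}^{\mathfrak d}$, $i\in\{1,\dots,H\}$ let $I_i^\theta=\{x\in[a,b]^d\colon b^\theta_i+\sum_{j=1}^d w^\theta_{i,j}x_j>0\}$ and let $\mathbf D^\theta=\{i\in\{1,\dots,H\}\colon |b^\theta_i|+\sum_{j=1}^d|w^\theta_{i,j}|=0\}$ (the set of degenerate hidden neurons). For $\varepsilon>0$, $B_\varepsilon(\theta)=\{\vartheta\in\mathbb{R}^{\mathfrak d}\colon\|\theta-\vartheta\|<\varepsilon\}$. (Known fact used in the paper: the limit defining $\mathcal G$ exists for all $\theta$, and $\mathcal G_{(i-1)d+j}(\theta)=2v^\theta_i\int_{I_i^\theta}x_j(\mathcal N^\theta(x)-f(x))p(x)\,\lambda(\mathrm dx)$, $\mathcal G_{Hd+i}(\theta)=2v^\theta_i\int_{I_i^\theta}(\mathcal N^\theta(x)-f(x))p(x)\,\lambda(\mathrm dx)$, $\mathcal G_{H(d+1)+i}(\theta)=2\int_{[a,b]^d}\max\{b^\theta_i+\sum_j w^\theta_{i,j}x_j,0\}(\mathcal N^\theta(x)-f(x))p(x)\,\lambda(\mathrm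 dx)$, $\mathcal G_{\mathfrak d}(\theta)=2\int_{[a,b]^d}(\mathcal N^\theta(x)-f(x))p(x)\,\lambda(\mathrm dx)$.) *)

theory Defs
  imports "HOL-Analysis.Analysis"
begin

text \<open>Parameter vectors theta in R^dd are represented as functions nat => real,
  with coordinates 1..dd; all other coordinates are fixed to 0.
  Inputs x in R^d are extensional functions on {1..d} (product measure space).\<close>

definition pdim :: "nat \<Rightarrow> nat \<Rightarrow> nat" where
  "pdim d H = d * H + 2 * H + 1"

definition param_space :: "nat \<Rightarrow> nat \<Rightarrow> (nat \<Rightarrow> real) set" where
  "param_space d H = {\<theta>. \<forall>k. k \<notin> {1..pdim d H} \<longrightarrow> \<theta> k = 0}"

definition pnorm_dist :: "nat \<Rightarrow> nat \<Rightarrow> (nat \<Rightarrow> real) \<Rightarrow> (nat \<Rightarrow> real) \<Rightarrow> real" where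
  "pnorm_dist d H \<theta> \<phi> = sqrt (\<Sum>k=1..pdim d H. (\<theta> k - \<phi> k)^2)"

definition wgt :: "nat \<Rightarrow> (nat \<Rightarrow> real) \<Rightarrow> nat \<Rightarrow> nat \<Rightarrow> real" where
  "wgt d \<theta> i j = \<theta> ((i - 1) * d + j)"

definition bia :: "nat \<Rightarrow> nat \<Rightarrow> (nat \<Rightarrow> real) \<Rightarrow> nat \<Rightarrow> real" where
  "bia d H \<theta> i = \<theta> (H * d + i)"

definition outw :: "nat \<Rightarrow> nat \<Rightarrow> (nat \<Rightarrow> real) \<Rightarrow> nat \<Rightarrow> real" where
  "outw d H \<theta> i = \<theta> (H * (d + 1) + i)"

definition outb :: "nat \<Rightarrow> nat \<Rightarrow> (nat \<Rightarrow> real) \<Rightarrow> real" where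
  "outb d H \<theta> = \<theta> (pdim d H)"

definition cube :: "nat \<Rightarrow> real \<Rightarrow> real \<Rightarrow> (nat \<Rightarrow> real) set" where
  "cube d a b = PiE {1..d} (\<lambda>_. {a..b})"

definition leb :: "nat \<Rightarrow> (nat \<Rightarrow> real) measure" where
  "leb d = completion (PiM {1..d} (\<lambda>_. lborel))"

definition net_act :: "(real \<Rightarrow> real) \<Rightarrow> nat \<Rightarrow> nat \<Rightarrow> (nat \<Rightarrow> real) \<Rightarrow> (nat \<Rightarrow> real) \<Rightarrow> real" where
  "net_act \<sigma> d H \<theta> x = outb d H \<theta> +
     (\<Sum>i=1..H. outw d H \<theta> i * \<sigma> (bia d H \<theta> i + (\<Sum>j=1..d. wgt d \<theta> i j * x j)))"

definition relu_net :: "nat \<Rightarrow> nat \<Rightarrow> (nat \<Rightarrow> real) \<Rightarrow> (nat \<Rightarrow> real) \<Rightarrow> real" where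
  "relu_net d H \<theta> x = net_act (\<lambda>y. max y 0) d H \<theta> x"

definition risk_act :: "(real \<Rightarrow> real) \<Rightarrow> nat \<Rightarrow> nat \<Rightarrow> real \<Rightarrow> real \<Rightarrow>
    ((nat \<Rightarrow> real) \<Rightarrow> real) \<Rightarrow> ((nat \<Rightarrow> real) \<Rightarrow> real) \<Rightarrow> (nat \<Rightarrow> real) \<Rightarrow> real" where
  "risk_act \<sigma> d H a b f p \<theta> =
     (LINT y : cube d a b | leb d. (f y - net_act \<sigma> d H \<theta> y)^2 * p y)"

definition degenerate :: "nat \<Rightarrow> nat \<Rightarrow> (nat \<Rightarrow> real) \<Rightarrow> nat set" where
  "degenerate d H \<theta> = {i \<in> {1..H}. \<bar>bia d H \<theta> i\<bar> + (\<Sum>j=1..d. \<bar>wgt d \<theta> i j\<bar>) = 0}"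

definition loc_lipschitz :: "nat \<Rightarrow> nat \<Rightarrow> (nat \<Rightarrow> real) set \<Rightarrow> ((nat \<Rightarrow> real) \<Rightarrow> real) \<Rightarrow> bool" where
  "loc_lipschitz d H S F \<longleftrightarrow>
     (\<forall>\<theta>\<in>S. \<exists>\<epsilon>>0. \<exists>L. \<forall>\<theta>1\<in>S. \<forall>\<theta>2\<in>S.
        pnorm_dist d H \<theta> \<theta>1 < \<epsilon> \<longrightarrow> pnorm_dist d H \<theta> \<theta>2 < \<epsilon> \<longrightarrow>
        \<bar>F \<theta>1 - F \<theta>2\<bar> \<le> L * pnorm_dist d H \<theta>1 \<theta>2)"

end

theory Submission
  imports Defs
begin

(* The generalized gradient G is first identified with an explicit integral. Differentiating the
   smoothed risk under the integral sign, with a dominating bound that is uniform for parameters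
   near theta, gives the integral of 2 (N - f) (dN/dtheta_k) p computed with the activation R_r;
   dominated convergence as r tends to infinity then replaces R_r by the ReLU and R_r' by the
   indicator of (0, infinity).

   For the output-layer coordinates this integrand is, near any parameter, built by sums and
   products from functions that are bounded and Lipschitz in theta uniformly on the cube, so its
   integral is locally Lipschitz. For an inner weight or bias of neuron i the integrand also
   contains the activation pattern of the neuron, the indicator of z_i(theta, x) > 0. Between
   theta1 and theta2 this pattern can only change where |z_i(theta1, x)| <= C |theta1 - theta2|.
   If some inner weight of neuron i is nonzero, this is a slab whose measure is
   O(|theta1 - theta2|) by Fubini along that coordinate; if only its bias is nonzero, the pattern
   is constant near theta. This is where the nondegeneracy of neuron i enters. *)

lemma abs_mult_le_mult:
  fixes u v U V :: real
  assumes "\<bar>u\<bar> \<le> U" "\<bar>v\<bar> \<le> V"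
  shows "\<bar>u * v\<bar> \<le> U * V"
  using assms by (simp add: abs_mult mult_mono')

lemma abs_sum_le_card_mult:
  fixes g :: "'a \<Rightarrow> real"
  assumes "\<And>i. i \<in> A \<Longrightarrow> \<bar>g i\<bar> \<le> c"
  shows "\<bar>sum g A\<bar> \<le> real (card A) * c"
  using order_trans[OF sum_abs sum_bounded_above[of A "\<lambda>i. \<bar>g i\<bar>" c]] assms by simp

lemma abs_diff_mult_le:
  fixes x1 x2 u1 u2 A B M1 M2 :: real
  assumes "\<bar>x1 - x2\<bar> \<le> A" "\<bar>u1 - u2\<bar> \<le> B" "\<bar>x1\<bar> \<le> M1" "\<bar>u2\<bar> \<le> M2"
  shows "\<bar>x1 * u1 - x2 * u2\<bar> \<le> M1 * B + M2 * A"
proof -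
  have "x1 * u1 - x2 * u2 = x1 * (u1 - u2) + u2 * (x1 - x2)"
    by (simp add: algebra_simps)
  moreover have "\<bar>x1 * (u1 - u2)\<bar> \<le> M1 * B" "\<bar>u2 * (x1 - x2)\<bar> \<le> M2 * A"
    using assms by (auto intro: abs_mult_le_mult)
  ultimately show ?thesis
    by (metis abs_triangle_ineq add_mono order_trans)
qed

lemma abs_indicator_pos_diff_le:
  fixes u v :: real
  shows "\<bar>indicat_real {0<..} u - indicat_real {0<..} v\<bar> \<le> of_bool (\<bar>u\<bar> \<le> \<bar>u - v\<bar>)"
  by (auto simp: indicator_def abs_real_def)

lemma abs_diff_le_of_derivative_bound:
  fixes g g' :: "real \<Rightarrow> real"
  assumes "\<And>t. (g has_real_derivative g' t) (at t)" "\<And>t. \<bar>t\<bar> \<le> K \<Longrightarrow> \<bar>g' t\<bar> \<le> B" "\<bar>s\<bar> \<le> K"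
  shows "\<bar>g s - g 0\<bar> \<le> B * \<bar>s\<bar>"
proof -
  have "norm (g s - g 0) \<le> B * norm (s - 0)"
    by (rule field_differentiable_bound[of "{-K..K}"])
      (use assms in \<open>auto intro: has_field_derivative_at_within simp: abs_le_iff\<close>)
  then show ?thesis
    by simp
qed

lemma continuous_bounded_on_interval:
  fixes g :: "real \<Rightarrow> real"
  assumes "continuous_on UNIV g"
  obtains S where "\<And>u. \<bar>u\<bar> \<le> Z \<Longrightarrow> \<bar>g u\<bar> \<le> S"
proof -
  have "compact (g ` {-Z..Z})"
    by (rule compact_continuous_image) (use assms continuous_on_subset in auto)
  then obtain S where "\<forall>x\<in>g ` {-Z..Z}. norm x \<le> S"
    using compact_imp_bounded bounded_iff by metis
  then show thesis
    by (intro that[of S]) (auto simp: abs_le_iff)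
qed

lemma uniformly_bounded_on_interval:
  fixes g g' :: "nat \<Rightarrow> real \<Rightarrow> real"
  assumes der: "\<And>r x. (g r has_real_derivative g' r x) (at x)"
    and g0: "\<And>r. \<bar>g r 0\<bar> \<le> B"
    and g': "\<And>x. \<exists>C. \<forall>r. \<forall>y\<in>{-\<bar>x\<bar>..\<bar>x\<bar>}. \<bar>g' r y\<bar> \<le> C"
  obtains S where "\<And>r u. \<bar>u\<bar> \<le> Z \<Longrightarrow> \<bar>g r u\<bar> \<le> S \<and> \<bar>g' r u\<bar> \<le> S"
proof -
  obtain C where C: "\<And>r y. y \<in> {-\<bar>Z\<bar>..\<bar>Z\<bar>} \<Longrightarrow> \<bar>g' r y\<bar> \<le> C"
    using g' by blast
  have "\<bar>g r u\<bar> \<le> B + C * \<bar>Z\<bar> + C \<and> \<bar>g' r u\<bar> \<le> B + C * \<bar>Z\<bar> + C" if u: "\<bar>u\<bar> \<le> Z" for r u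
  proof -
    have C0: "0 \<le> C"
      using C[of 0 r] by auto
    have "\<bar>g r u - g r 0\<bar> \<le> C * \<bar>u\<bar>"
      by (rule abs_diff_le_of_derivative_bound[where K="\<bar>Z\<bar>"]) (use der C u in \<open>auto simp: abs_le_iff\<close>)
    also have "\<dots> \<le> C * \<bar>Z\<bar>"
      using u C0 by (intro mult_left_mono) auto
    finally have "\<bar>g r u\<bar> \<le> B + C * \<bar>Z\<bar>"
      using g0[of r] by linarith
    moreover have "\<bar>g' r u\<bar> \<le> C"
      using C[of u r] u by (auto simp: abs_le_iff)
    ultimately show ?thesis
      using C0 by (smt (verit) mult_nonneg_nonneg abs_ge_zero)
  qed
  then show thesis
    by (rule that)
qed

lemma integrable_of_derivative_dominated:
  fixes \<phi> \<phi>' :: "real \<Rightarrow> 'a \<Rightarrow> real"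
  assumes meas: "\<And>t. \<phi> t \<in> borel_measurable M"
    and der: "\<And>x t. x \<in> space M \<Longrightarrow> ((\<lambda>s. \<phi> s x) has_real_derivative \<phi>' t x) (at t)"
    and bnd: "\<And>x t. x \<in> space M \<Longrightarrow> \<bar>t\<bar> \<le> 1 \<Longrightarrow> \<bar>\<phi>' t x\<bar> \<le> w x"
    and int_w: "integrable M w" and int_0: "integrable M (\<phi> 0)" and t: "\<bar>t\<bar> \<le> 1"
  shows "integrable M (\<phi> t)"
proof -
  have "integrable M (\<lambda>x. \<phi> t x - \<phi> 0 x)"
  proof (rule Bochner_Integration.integrable_bound[where f="\<lambda>x. w x * \<bar>t\<bar>"])
    have "\<bar>\<phi> t x - \<phi> 0 x\<bar> \<le> w x * \<bar>t\<bar>" if "x \<in> space M" for x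
      by (rule abs_diff_le_of_derivative_bound[OF der[OF that] bnd[OF that] t])
    then show "AE x in M. norm (\<phi> t x - \<phi> 0 x) \<le> norm (w x * \<bar>t\<bar>)"
      by (intro AE_I2) (force intro: order_trans[OF _ abs_ge_self])
  qed (use int_w meas in auto)
  from Bochner_Integration.integrable_add[OF this int_0] show ?thesis
    by simp
qed

lemma integral_difference_quotient_tendsto:
  fixes \<phi> \<phi>' :: "real \<Rightarrow> 'a \<Rightarrow> real"
  assumes meas: "\<And>t. \<phi> t \<in> borel_measurable M" and meas': "\<phi>' 0 \<in> borel_measurable M"
    and der: "\<And>x t. x \<in> space M \<Longrightarrow> ((\<lambda>s. \<phi> s x) has_real_derivative \<phi>' t x) (at t)"
    and bnd: "\<And>x t. x \<in> space M \<Longrightarrow> \<bar>t\<bar> \<le> 1 \<Longrightarrow> \<bar>\<phi>' t x\<bar> \<le> w x"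
    and int_w: "integrable M w"
    and X: "\<forall>i. X i \<in> {-1<..<1} - {0}" "X \<longlonglongrightarrow> 0"
  shows "(\<lambda>n. integral\<^sup>L M (\<lambda>x. (\<phi> (X n) x - \<phi> 0 x) / X n)) \<longlonglongrightarrow> integral\<^sup>L M (\<phi>' 0)"
proof (rule integral_dominated_convergence[where w=w])
  have X_le: "\<bar>X n\<bar> \<le> 1" for n
    using X(1) by (simp add: abs_le_iff less_imp_le)
  show "AE x in M. (\<lambda>n. (\<phi> (X n) x - \<phi> 0 x) / X n) \<longlonglongrightarrow> \<phi>' 0 x"
  proof (rule AE_I2)
    fix x assume "x \<in> space M"
    then have "((\<lambda>s. (\<phi> s x - \<phi> 0 x) / (s - 0)) \<longlongrightarrow> \<phi>' 0 x) (at 0)"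
      using der unfolding has_field_derivative_iff by blast
    from this[unfolded tendsto_at_iff_sequentially, rule_format, of X] X
    show "(\<lambda>n. (\<phi> (X n) x - \<phi> 0 x) / X n) \<longlonglongrightarrow> \<phi>' 0 x"
      unfolding o_def by simp
  qed
  show "AE x in M. norm ((\<phi> (X n) x - \<phi> 0 x) / X n) \<le> w x" for n
  proof (rule AE_I2)
    fix x assume x: "x \<in> space M"
    have "\<bar>\<phi> (X n) x - \<phi> 0 x\<bar> \<le> w x * \<bar>X n\<bar>"
      by (rule abs_diff_le_of_derivative_bound[OF der[OF x] bnd[OF x] X_le])
    then show "norm ((\<phi> (X n) x - \<phi> 0 x) / X n) \<le> w x"
      using X(1) by (auto simp: divide_le_eq)
  qed
qed (use meas meas' int_w in auto)

lemma integral_has_real_derivative_dominated: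
  fixes \<phi> \<phi>' :: "real \<Rightarrow> 'a \<Rightarrow> real"
  assumes meas: "\<And>t. \<phi> t \<in> borel_measurable M" and meas': "\<phi>' 0 \<in> borel_measurable M"
    and der: "\<And>x t. x \<in> space M \<Longrightarrow> ((\<lambda>s. \<phi> s x) has_real_derivative \<phi>' t x) (at t)"
    and bnd: "\<And>x t. x \<in> space M \<Longrightarrow> \<bar>t\<bar> \<le> 1 \<Longrightarrow> \<bar>\<phi>' t x\<bar> \<le> w x"
    and int_w: "integrable M w" and int_0: "integrable M (\<phi> 0)"
  shows "((\<lambda>t. integral\<^sup>L M (\<phi> t)) has_real_derivative integral\<^sup>L M (\<phi>' 0)) (at 0)"
proof -
  have "((\<lambda>s. (integral\<^sup>L M (\<phi> s) - integral\<^sup>L M (\<phi> 0)) / (s - 0)) \<longlongrightarrow> integral\<^sup>L M (\<phi>' 0))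
      (at 0 within {-1<..<1})"
    unfolding tendsto_at_iff_sequentially
  proof (intro allI impI)
    fix X :: "nat \<Rightarrow> real" assume X: "\<forall>i. X i \<in> {-1<..<1} - {0}" "X \<longlonglongrightarrow> 0"
    have X_le: "\<bar>X n\<bar> \<le> 1" for n
      using X(1) by (simp add: abs_le_iff less_imp_le)
    have "integrable M (\<phi> (X n))" for n
      by (rule integrable_of_derivative_dominated[OF meas der bnd int_w int_0 X_le])
    then have eq: "integral\<^sup>L M (\<lambda>x. (\<phi> (X n) x - \<phi> 0 x) / X n)
        = ((\<lambda>s. (integral\<^sup>L M (\<phi> s) - integral\<^sup>L M (\<phi> 0)) / (s - 0)) \<circ> X) n" for n
      using int_0 by simp
    show "((\<lambda>s. (integral\<^sup>L M (\<phi> s) - integral\<^sup>L M (\<phi> 0)) / (s - 0)) \<circ> X) \<longlonglongrightarrow> integral\<^sup>L M (\<phi>' 0)"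
      using integral_difference_quotient_tendsto[OF meas meas' der bnd int_w X] unfolding eq .
  qed
  moreover have "at (0::real) within {-1<..<1} = at 0"
    by (rule at_within_open) auto
  ultimately show ?thesis
    unfolding has_field_derivative_iff by simp
qed

section \<open>The cube and slabs in it\<close>

interpretation lborel_nat: product_sigma_finite "\<lambda>_::nat. lborel :: real measure"
  by standard

lemma sets_cube_PiM: "cube d a b \<in> sets (PiM {1..d} (\<lambda>_. lborel))"
  unfolding cube_def by (intro sets_PiM_I_finite) auto

lemma sets_leb_cube: "cube d a b \<in> sets (leb d)"
  using sets_cube_PiM unfolding leb_def by auto

lemma emeasure_leb_cube: "a \<le> b \<Longrightarrow> emeasure (leb d) (cube d a b) = ennreal ((b - a) ^ d)"
  unfolding leb_def using sets_cube_PiM[of d a b]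
  by (simp add: lborel_nat.emeasure_PiM cube_def prod_ennreal ennreal_power)

lemma measure_leb_cube: "a \<le> b \<Longrightarrow> measure (leb d) (cube d a b) = (b - a) ^ d"
  by (simp add: emeasure_leb_cube measure_def)

lemma borel_measurable_leb_coord: "j \<in> {1..d} \<Longrightarrow> (\<lambda>y. y j) \<in> borel_measurable (leb d)"
  unfolding leb_def by (intro measurable_completion) measurable

lemma abs_cube_coord_le:
  assumes "y \<in> cube d a b" "j \<in> {1..d}"
  shows "\<bar>y j\<bar> \<le> \<bar>a\<bar> + \<bar>b\<bar>"
proof -
  have "a \<le> y j" "y j \<le> b"
    using assms unfolding cube_def by (auto simp: PiE_iff)
  then show ?thesis by linarith
qed

lemma compact_cube: "compact (cube d a b)"
proof -
  have "cube d a b = PiE UNIV (\<lambda>i. if i \<in> {1..d} then {a..b} else {undefined})"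
    unfolding cube_def by (auto simp: PiE_iff extensional_def split: if_splits)
  then have "compactin (product_topology (\<lambda>_. euclidean) UNIV) (cube d a b)"
    by (simp add: compactin_PiE)
  then show ?thesis
    by (simp add: euclidean_product_topology)
qed

lemma set_integrable_cube:
  fixes g :: "(nat \<Rightarrow> real) \<Rightarrow> real"
  assumes "a \<le> b" "g \<in> borel_measurable (leb d)" "\<And>y. y \<in> cube d a b \<Longrightarrow> \<bar>g y\<bar> \<le> B"
  shows "set_integrable (leb d) (cube d a b) g"
  unfolding set_integrable_def
  using integrableI_bounded_set_indicator[OF sets_leb_cube assms(2), of a b B] assms
  by (simp add: emeasure_leb_cube)

text \<open>Outside \<open>{1..d}\<close> the clamp is \<open>undefined\<close>, like the extensional points of the cube.\<close>

definition cube_clamp :: "nat \<Rightarrow> real \<Rightarrow> real \<Rightarrow> (nat \<Rightarrow> real) \<Rightarrow> nat \<Rightarrow> real" where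
  "cube_clamp d a b y = (\<lambda>i. if i \<in> {1..d} then max a (min b (y i)) else undefined)"

lemma cube_clamp_in_cube: "a \<le> b \<Longrightarrow> cube_clamp d a b y \<in> cube d a b"
  by (auto simp: cube_clamp_def cube_def PiE_iff extensional_def)

lemma cube_clamp_id: "y \<in> cube d a b \<Longrightarrow> cube_clamp d a b y = y"
  by (auto simp: cube_clamp_def cube_def PiE_iff extensional_def fun_eq_iff)

lemma continuous_on_cube_clamp: "continuous_on UNIV (cube_clamp d a b)"
  unfolding cube_clamp_def
proof (intro continuous_on_coordinatewise_then_product)
  show "continuous_on UNIV (\<lambda>y. if i \<in> {1..d} then max a (min b (y i)) else undefined)" for i
    by (cases "i \<in> {1..d}") (auto intro!: continuous_on_max continuous_on_min continuous_on_product_coordinates)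
qed

lemma borel_measurable_cube_clamp: "cube_clamp d a b \<in> borel_measurable (leb d)"
  unfolding leb_def
proof (intro measurable_completion measurable_coordinatewise_then_product)
  fix i
  show "(\<lambda>y. cube_clamp d a b y i) \<in> borel_measurable (PiM {1..d} (\<lambda>_. lborel))"
  proof (cases "i \<in> {1..d}")
    case True
    then have "(\<lambda>y. cube_clamp d a b y i) = (\<lambda>y. max a (min b (y i)))"
      by (simp add: cube_clamp_def)
    with True show ?thesis by simp
  next
    case False
    then have "(\<lambda>y. cube_clamp d a b y i) = (\<lambda>y. undefined)"
      by (auto simp: cube_clamp_def fun_eq_iff)
    then show ?thesis by simp
  qed
qed

text \<open>A function continuous on the cube need not be measurable on the whole space; composing it
  with the clamp onto the cube gives a measurable function that agrees with it on the cube.\<close>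

lemma borel_measurable_clamp_extension:
  assumes "continuous_on (cube d a b) f" "a \<le> b"
  shows "(\<lambda>y. f (cube_clamp d a b y)) \<in> borel_measurable (leb d)"
proof -
  have "continuous_on UNIV (\<lambda>y. f (cube_clamp d a b y))"
    by (rule continuous_on_compose2[OF assms(1) continuous_on_cube_clamp])
      (use cube_clamp_in_cube[OF assms(2)] in auto)
  from measurable_comp[OF borel_measurable_cube_clamp borel_measurable_continuous_onI[OF this]]
  have "(\<lambda>y. f (cube_clamp d a b y)) \<circ> cube_clamp d a b \<in> borel_measurable (leb d)" .
  moreover have "(\<lambda>y. f (cube_clamp d a b y)) \<circ> cube_clamp d a b = (\<lambda>y. f (cube_clamp d a b y))"
    by (simp add: comp_def cube_clamp_id[OF cube_clamp_in_cube[OF assms(2)]])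
  ultimately show ?thesis by simp
qed

lemma sets_PiM_slab: "{y \<in> cube d a b. \<bar>c + (\<Sum>j=1..d. w j * y j)\<bar> \<le> \<eta>} \<in> sets (PiM {1..d} (\<lambda>_. lborel))"
proof -
  have "{y \<in> cube d a b. \<bar>c + (\<Sum>j=1..d. w j * y j)\<bar> \<le> \<eta>}
      = cube d a b \<inter> {y \<in> space (PiM {1..d} (\<lambda>_. lborel)). \<bar>c + (\<Sum>j=1..d. w j * y j)\<bar> \<le> \<eta>}"
    by (auto simp: space_PiM cube_def PiE_iff extensional_def)
  also have "\<dots> \<in> sets (PiM {1..d} (\<lambda>_. lborel))"
    using sets_cube_PiM[of d a b] by measurable
  finally show ?thesis .
qed

lemma slab_fiber_bound:
  fixes w x :: "nat \<Rightarrow> real"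
  assumes "j0 \<in> {1..d}" "w j0 \<noteq> 0" "\<bar>c + (\<Sum>j=1..d. w j * (x(j0 := t)) j)\<bar> \<le> \<eta>"
  shows "\<bar>t + (c + (\<Sum>j\<in>{1..d} - {j0}. w j * x j)) / w j0\<bar> \<le> \<eta> / \<bar>w j0\<bar>"
proof -
  have "(\<Sum>j=1..d. w j * (x(j0 := t)) j) = w j0 * t + (\<Sum>j\<in>{1..d} - {j0}. w j * (x(j0 := t)) j)"
    using assms(1) by (simp add: sum.remove)
  also have "(\<Sum>j\<in>{1..d} - {j0}. w j * (x(j0 := t)) j) = (\<Sum>j\<in>{1..d} - {j0}. w j * x j)"
    by (intro sum.cong) auto
  finally have eq: "c + (\<Sum>j=1..d. w j * (x(j0 := t)) j)
      = w j0 * (t + (c + (\<Sum>j\<in>{1..d} - {j0}. w j * x j)) / w j0)"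
    using assms(2) by (simp add: field_simps)
  from assms(3) have "\<bar>w j0\<bar> * \<bar>t + (c + (\<Sum>j\<in>{1..d} - {j0}. w j * x j)) / w j0\<bar> \<le> \<eta>"
    unfolding eq abs_mult .
  with assms(2) show ?thesis
    by (simp add: field_simps)
qed

lemma emeasure_PiM_insert_fiber_le:
  fixes u :: "(nat \<Rightarrow> real) \<Rightarrow> real"
  assumes "j0 \<notin> I" "finite I" "0 \<le> r"
    and S: "S \<in> sets (PiM (insert j0 I) (\<lambda>_. lborel))" and A: "A \<in> sets (PiM I (\<lambda>_. lborel))"
    and fiber: "\<And>x t. x \<in> space (PiM I (\<lambda>_. lborel)) \<Longrightarrow> x(j0 := t) \<in> S \<Longrightarrow> x \<in> A \<and> \<bar>t - u x\<bar> \<le> r"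
  shows "emeasure (PiM (insert j0 I) (\<lambda>_. lborel)) S \<le> ennreal (2 * r) * emeasure (PiM I (\<lambda>_. lborel)) A"
proof -
  have "indicator S (x(j0 := t)) \<le> (indicator A x * indicator {u x - r .. u x + r} t :: ennreal)"
    if "x \<in> space (PiM I (\<lambda>_. lborel))" for x t
  proof (cases "x(j0 := t) \<in> S")
    case True
    with fiber[OF that True] show ?thesis
      by (simp add: abs_le_iff)
  qed simp
  then have "(\<integral>\<^sup>+ x. (\<integral>\<^sup>+ t. indicator S (x(j0 := t)) \<partial>lborel) \<partial>PiM I (\<lambda>_. lborel))
      \<le> (\<integral>\<^sup>+ x. (\<integral>\<^sup>+ t. indicator A x * indicator {u x - r .. u x + r} t \<partial>lborel) \<partial>PiM I (\<lambda>_. lborel))"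
    by (intro nn_integral_mono) auto
  also have "\<dots> = (\<integral>\<^sup>+ x. ennreal (2 * r) * indicator A x \<partial>PiM I (\<lambda>_. lborel))"
    using \<open>0 \<le> r\<close> by (intro nn_integral_cong) (simp add: nn_integral_cmult_indicator mult.commute)
  also have "\<dots> = ennreal (2 * r) * emeasure (PiM I (\<lambda>_. lborel)) A"
    using A by (rule nn_integral_cmult_indicator)
  finally show ?thesis
    using S by (simp add: lborel_nat.product_nn_integral_insert[OF assms(2,1)] flip: nn_integral_indicator)
qed

lemma measure_leb_slab_le:
  fixes w :: "nat \<Rightarrow> real" and c \<eta> :: real
  assumes j0: "j0 \<in> {1..d}" and w0: "w j0 \<noteq> 0" and "0 \<le> \<eta>" and "a \<le> b"
  defines "S \<equiv> {y \<in> cube d a b. \<bar>c + (\<Sum>j=1..d. w j * y j)\<bar> \<le> \<eta>}"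
  shows "measure (leb d) S \<le> 2 * (\<eta> / \<bar>w j0\<bar>) * (b - a) ^ (d - 1)"
proof -
  define I where "I = {1..d} - {j0}"
  have dI: "{1..d} = insert j0 I" "j0 \<notin> I" "finite I"
    using j0 by (auto simp: I_def)
  define A where "A = PiE I (\<lambda>_. {a..b::real})"
  define r where "r = \<eta> / \<bar>w j0\<bar>"
  have r: "0 \<le> r"
    unfolding r_def using \<open>0 \<le> \<eta>\<close> by simp
  have S_sets: "S \<in> sets (PiM (insert j0 I) (\<lambda>_. lborel))"
    unfolding S_def dI(1)[symmetric] by (rule sets_PiM_slab)
  have "emeasure (leb d) S = emeasure (PiM (insert j0 I) (\<lambda>_. lborel)) S"
    using S_sets unfolding leb_def dI(1) by simp
  also have "\<dots> \<le> ennreal (2 * r) * emeasure (PiM I (\<lambda>_. lborel)) A"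
  proof (rule emeasure_PiM_insert_fiber_le[OF dI(2,3) r S_sets, where u="\<lambda>x. - ((c + (\<Sum>j\<in>I. w j * x j)) / w j0)"])
    show "A \<in> sets (PiM I (\<lambda>_. lborel))"
      unfolding A_def by (auto intro!: sets_PiM_I_finite dI(3))
    fix x t assume x: "x \<in> space (PiM I (\<lambda>_. lborel))" and xt: "x(j0 := t) \<in> S"
    have "x \<in> A"
      using xt x dI(2) unfolding S_def A_def cube_def dI(1) by (auto simp: PiE_iff space_PiM split: if_splits)
    moreover have "\<bar>t + (c + (\<Sum>j\<in>I. w j * x j)) / w j0\<bar> \<le> \<eta> / \<bar>w j0\<bar>"
      using slab_fiber_bound[of j0 d w c x t \<eta>] j0 w0 xt unfolding S_def I_def by simp
    ultimately show "x \<in> A \<and> \<bar>t - - ((c + (\<Sum>j\<in>I. w j * x j)) / w j0)\<bar> \<le> r"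
      by (simp add: r_def)
  qed
  also have "emeasure (PiM I (\<lambda>_. lborel)) A = ennreal ((b - a) ^ (d - 1))"
    using j0 dI(3) \<open>a \<le> b\<close> unfolding A_def I_def
    by (simp add: lborel_nat.emeasure_PiM prod_ennreal ennreal_power card_Diff_singleton)
  finally have "emeasure (leb d) S \<le> ennreal (2 * r * (b - a) ^ (d - 1))"
    using r \<open>a \<le> b\<close> by (simp add: ennreal_mult)
  then have "measure (leb d) S \<le> 2 * r * (b - a) ^ (d - 1)"
    unfolding measure_def using r \<open>a \<le> b\<close> by (intro enn2real_leI) auto
  then show ?thesis
    by (simp add: r_def)
qed

lemma abs_diff_le_pnorm_dist:
  assumes "m \<in> {1..pdim d H}"
  shows "\<bar>\<theta>1 m - \<theta>2 m\<bar> \<le> pnorm_dist d H \<theta>1 \<theta>2"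
proof -
  have "(\<theta>1 m - \<theta>2 m)\<^sup>2 \<le> (\<Sum>k=1..pdim d H. (\<theta>1 k - \<theta>2 k)\<^sup>2)"
    by (rule member_le_sum) (use assms in auto)
  then have "sqrt ((\<theta>1 m - \<theta>2 m)\<^sup>2) \<le> pnorm_dist d H \<theta>1 \<theta>2"
    unfolding pnorm_dist_def by (rule real_sqrt_le_mono)
  then show ?thesis by simp
qed

lemma pnorm_dist_nonneg: "0 \<le> pnorm_dist d H \<theta>1 \<theta>2"
  unfolding pnorm_dist_def by (auto intro: sum_nonneg)

lemma pnorm_dist_commute: "pnorm_dist d H \<theta>1 \<theta>2 = pnorm_dist d H \<theta>2 \<theta>1"
  unfolding pnorm_dist_def by (simp add: power2_commute)

lemma param_space_bounded:
  assumes "\<theta> \<in> param_space d H"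
  obtains T where "\<And>m. \<bar>\<theta> m\<bar> \<le> T"
proof
  show "\<bar>\<theta> m\<bar> \<le> (\<Sum>k=1..pdim d H. \<bar>\<theta> k\<bar>)" for m
  proof (cases "m \<in> {1..pdim d H}")
    case True
    then show ?thesis by (intro member_le_sum) auto
  next
    case False
    then show ?thesis using assms by (simp add: param_space_def sum_nonneg)
  qed
qed

definition pball :: "nat \<Rightarrow> nat \<Rightarrow> (nat \<Rightarrow> real) \<Rightarrow> real \<Rightarrow> (nat \<Rightarrow> real) set" where
  "pball d H \<theta>0 \<epsilon> = {\<theta>. pnorm_dist d H \<theta>0 \<theta> < \<epsilon>}"

definition lipschitz_near :: "nat \<Rightarrow> nat \<Rightarrow> ((nat \<Rightarrow> real) \<Rightarrow> real) \<Rightarrow> (nat \<Rightarrow> real) \<Rightarrow> bool" where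
  "lipschitz_near d H F \<theta>0 \<longleftrightarrow> (\<exists>\<epsilon>>0. \<exists>L. \<forall>\<theta>1\<in>pball d H \<theta>0 \<epsilon>. \<forall>\<theta>2\<in>pball d H \<theta>0 \<epsilon>.
     \<bar>F \<theta>1 - F \<theta>2\<bar> \<le> L * pnorm_dist d H \<theta>1 \<theta>2)"

lemma loc_lipschitzI:
  assumes "\<And>\<theta>. \<theta> \<in> S \<Longrightarrow> G \<theta> = F \<theta>" "\<And>\<theta>. \<theta> \<in> S \<Longrightarrow> lipschitz_near d H F \<theta>"
  shows "loc_lipschitz d H S G"
  using assms unfolding loc_lipschitz_def lipschitz_near_def pball_def by (metis mem_Collect_eq)

lemma weight_index_le:
  fixes i j d H :: nat
  assumes "i \<in> {1..H}" "j \<in> {1..d}"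
  shows "(i - 1) * d + j \<le> H * d"
proof -
  have "(i - 1) * d + j \<le> (i - 1) * d + d"
    using assms by (auto intro: add_left_mono)
  also have "\<dots> = i * d"
    using assms by (cases i) auto
  also have "\<dots> \<le> H * d"
    using assms by simp
  finally show ?thesis .
qed

lemma weight_index_mem: "i \<in> {1..H} \<Longrightarrow> j \<in> {1..d} \<Longrightarrow> (i - 1) * d + j \<in> {1..pdim d H}"
  using weight_index_le[of i H j d] unfolding pdim_def by (simp add: mult.commute)

lemma bias_index_mem: "i \<in> {1..H} \<Longrightarrow> H * d + i \<in> {1..pdim d H}"
  by (auto simp: pdim_def)

lemma outw_index_mem: "i \<in> {1..H} \<Longrightarrow> H * (d + 1) + i \<in> {1..pdim d H}"
  by (auto simp: pdim_def)

lemma pdim_mem: "pdim d H \<in> {1..pdim d H}"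
  by (auto simp: pdim_def)

lemma weight_index_inj:
  fixes i i' j j' d :: nat
  assumes "1 \<le> i" "1 \<le> i'" "j \<in> {1..d}" "j' \<in> {1..d}" "(i - 1) * d + j = (i' - 1) * d + j'"
  shows "i = i' \<and> j = j'"
proof -
  have eq: "(j - 1) + (i - 1) * d = (j' - 1) + (i' - 1) * d"
    using assms by auto
  have "j - 1 < d" "j' - 1 < d"
    using assms by auto
  then have "i - 1 = i' - 1 \<and> j - 1 = j' - 1"
    using arg_cong[OF eq, of "\<lambda>n. n div d"] arg_cong[OF eq, of "\<lambda>n. n mod d"] by simp
  then show ?thesis
    using assms by auto
qed

section \<open>The network and its partial derivatives\<close>

definition preact :: "nat \<Rightarrow> nat \<Rightarrow> (nat \<Rightarrow> real) \<Rightarrow> nat \<Rightarrow> (nat \<Rightarrow> real) \<Rightarrow> real" where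
  "preact d H \<theta> i y = bia d H \<theta> i + (\<Sum>j=1..d. wgt d \<theta> i j * y j)"

lemma net_act_preact:
  "net_act \<sigma> d H \<theta> y = outb d H \<theta> + (\<Sum>i=1..H. outw d H \<theta> i * \<sigma> (preact d H \<theta> i y))"
  by (simp add: net_act_def preact_def)

definition net_act_partial :: "(real \<Rightarrow> real) \<Rightarrow> (real \<Rightarrow> real) \<Rightarrow> nat \<Rightarrow> nat \<Rightarrow>
    (nat \<Rightarrow> real) \<Rightarrow> nat \<Rightarrow> (nat \<Rightarrow> real) \<Rightarrow> real" where
  "net_act_partial \<sigma> \<sigma>' d H \<theta> k y = of_bool (pdim d H = k) +
     (\<Sum>i=1..H. of_bool (H * (d + 1) + i = k) * \<sigma> (preact d H \<theta> i y)
        + outw d H \<theta> i * \<sigma>' (preact d H \<theta> i y)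
          * (of_bool (H * d + i = k) + (\<Sum>j=1..d. of_bool ((i - 1) * d + j = k) * y j)))"

lemma fun_upd_add_has_real_derivative:
  "((\<lambda>t. (\<theta>(k := \<theta> k + t)) m) has_real_derivative of_bool (m = k)) (at t0)"
  for \<theta> :: "nat \<Rightarrow> real"
  by (cases "m = k") (auto intro!: derivative_eq_intros)

lemma preact_has_partial_derivative:
  "((\<lambda>t. preact d H (\<theta>(k := \<theta> k + t)) i y) has_real_derivative
      of_bool (H * d + i = k) + (\<Sum>j=1..d. of_bool ((i - 1) * d + j = k) * y j)) (at t0)"
  unfolding preact_def bia_def wgt_def
  by (rule DERIV_cong, (rule DERIV_add DERIV_sum DERIV_mult DERIV_const fun_upd_add_has_real_derivative)+)
    simp

lemma net_act_has_partial_derivative: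
  assumes "\<And>x. (\<sigma> has_real_derivative \<sigma>' x) (at x)"
  shows "((\<lambda>t. net_act \<sigma> d H (\<theta>(k := \<theta> k + t)) y) has_real_derivative
           net_act_partial \<sigma> \<sigma>' d H (\<theta>(k := \<theta> k + t0)) k y) (at t0)"
  unfolding net_act_preact net_act_partial_def outb_def outw_def
  by (rule DERIV_cong, (rule DERIV_add DERIV_sum DERIV_mult DERIV_chain2[OF assms]
      fun_upd_add_has_real_derivative preact_has_partial_derivative)+) (auto simp: algebra_simps intro!: sum.cong)

lemma squared_loss_has_partial_derivative:
  assumes "\<And>x. (\<sigma> has_real_derivative \<sigma>' x) (at x)"
  shows "((\<lambda>t. (c - net_act \<sigma> d H (\<theta>(k := \<theta> k + t)) y)\<^sup>2 * q) has_real_derivative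
      2 * (net_act \<sigma> d H (\<theta>(k := \<theta> k + t0)) y - c) * net_act_partial \<sigma> \<sigma>' d H (\<theta>(k := \<theta> k + t0)) k y * q)
    (at t0)"
  by (rule DERIV_cong, (rule DERIV_mult DERIV_const DERIV_power DERIV_diff
      net_act_has_partial_derivative[OF assms])+) (simp add: algebra_simps)

lemma net_act_partial_outer:
  assumes "H * d + H < k"
  shows "net_act_partial \<sigma> \<sigma>' d H \<theta> k y =
    of_bool (pdim d H = k) + (\<Sum>i=1..H. of_bool (H * (d + 1) + i = k) * \<sigma> (preact d H \<theta> i y))"
proof -
  have "(i - 1) * d + j \<noteq> k" if "i \<in> {1..H}" "j \<in> {1..d}" for i j
    using weight_index_le[OF that] assms by linarith
  then have "of_bool (H * d + i = k) + (\<Sum>j=1..d. of_bool ((i - 1) * d + j = k) * y j) = (0::real)"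
    if "i \<in> {1..H}" for i
    using that assms by (auto intro!: sum.neutral)
  then show ?thesis
    unfolding net_act_partial_def by (auto intro!: sum.cong)
qed

lemma net_act_partial_weight:
  assumes i: "i \<in> {1..H}" and j: "j \<in> {1..d}"
  shows "net_act_partial \<sigma> \<sigma>' d H \<theta> ((i - 1) * d + j) y = outw d H \<theta> i * \<sigma>' (preact d H \<theta> i y) * y j"
proof -
  let ?k = "(i - 1) * d + j"
  have k: "?k \<le> H * d"
    by (rule weight_index_le[OF i j])
  have "(\<Sum>j'=1..d. of_bool ((i' - 1) * d + j' = ?k) * y j') = (if i' = i then y j else 0)"
    if i': "i' \<in> {1..H}" for i'
  proof -
    have "(\<Sum>j'=1..d. of_bool ((i' - 1) * d + j' = ?k) * y j') = (\<Sum>j'=1..d. if i' = i \<and> j' = j then y j else 0)"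
      using weight_index_inj[of i' i _ d j] i i' j by (intro sum.cong) auto
    then show ?thesis
      using j by (cases "i' = i") auto
  qed
  moreover have "H * (d + 1) + i' \<noteq> ?k" "H * d + i' \<noteq> ?k" if "i' \<in> {1..H}" for i'
    using k that by (auto simp: algebra_simps)
  ultimately have summand: "of_bool (H * (d + 1) + i' = ?k) * \<sigma> (preact d H \<theta> i' y)
      + outw d H \<theta> i' * \<sigma>' (preact d H \<theta> i' y)
        * (of_bool (H * d + i' = ?k) + (\<Sum>j'=1..d. of_bool ((i' - 1) * d + j' = ?k) * y j'))
      = (if i' = i then outw d H \<theta> i * \<sigma>' (preact d H \<theta> i y) * y j else 0)"
    if "i' \<in> {1..H}" for i'
    using that by auto
  have "net_act_partial \<sigma> \<sigma>' d H \<theta> ?k y = of_bool (pdim d H = ?k)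
      + (\<Sum>i'=1..H. if i' = i then outw d H \<theta> i * \<sigma>' (preact d H \<theta> i y) * y j else 0)"
    unfolding net_act_partial_def by (intro arg_cong2[where f="(+)"] refl sum.cong summand)
  also have "\<dots> = outw d H \<theta> i * \<sigma>' (preact d H \<theta> i y) * y j"
    using i k by (simp add: pdim_def mult.commute)
  finally show ?thesis .
qed

lemma net_act_partial_bias:
  assumes i: "i \<in> {1..H}"
  shows "net_act_partial \<sigma> \<sigma>' d H \<theta> (H * d + i) y = outw d H \<theta> i * \<sigma>' (preact d H \<theta> i y)"
proof -
  have "(i' - 1) * d + j \<noteq> H * d + i" if "i' \<in> {1..H}" "j \<in> {1..d}" for i' j
    using weight_index_le[OF that] i by auto
  then have "(\<Sum>j=1..d. of_bool ((i' - 1) * d + j = H * d + i) * y j) = 0" if "i' \<in> {1..H}" for i'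
    using that by (intro sum.neutral) auto
  moreover have "H * (d + 1) + i' \<noteq> H * d + i" if "i' \<in> {1..H}" for i'
    using i that by (auto simp: algebra_simps)
  ultimately have summand: "of_bool (H * (d + 1) + i' = H * d + i) * \<sigma> (preact d H \<theta> i' y)
      + outw d H \<theta> i' * \<sigma>' (preact d H \<theta> i' y)
        * (of_bool (H * d + i' = H * d + i) + (\<Sum>j=1..d. of_bool ((i' - 1) * d + j = H * d + i) * y j))
      = (if i' = i then outw d H \<theta> i * \<sigma>' (preact d H \<theta> i y) else 0)"
    if "i' \<in> {1..H}" for i'
    using that by auto
  have "net_act_partial \<sigma> \<sigma>' d H \<theta> (H * d + i) y = of_bool (pdim d H = H * d + i)
      + (\<Sum>i'=1..H. if i' = i then outw d H \<theta> i * \<sigma>' (preact d H \<theta> i y) else 0)"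
    unfolding net_act_partial_def by (intro arg_cong2[where f="(+)"] refl sum.cong summand)
  also have "\<dots> = outw d H \<theta> i * \<sigma>' (preact d H \<theta> i y)"
    using i by (simp add: pdim_def)
  finally show ?thesis .
qed

lemma abs_preact_le:
  assumes "\<And>m. \<bar>\<theta> m\<bar> \<le> T" "\<And>j. j \<in> {1..d} \<Longrightarrow> \<bar>y j\<bar> \<le> Y"
  shows "\<bar>preact d H \<theta> i y\<bar> \<le> T + real d * (T * Y)"
proof -
  have "\<bar>\<Sum>j=1..d. wgt d \<theta> i j * y j\<bar> \<le> real (card {1..d}) * (T * Y)"
    using assms by (intro abs_sum_le_card_mult abs_mult_le_mult) (auto simp: wgt_def)
  moreover have "\<bar>bia d H \<theta> i\<bar> \<le> T"
    using assms by (simp add: bia_def)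
  ultimately show ?thesis
    unfolding preact_def by simp
qed

lemma abs_net_act_le:
  assumes T: "\<And>m. \<bar>\<theta> m\<bar> \<le> T" and y: "y \<in> cube d a b"
    and S: "\<And>u. \<bar>u\<bar> \<le> T + real d * (T * (\<bar>a\<bar> + \<bar>b\<bar>)) \<Longrightarrow> \<bar>\<sigma> u\<bar> \<le> S"
  shows "\<bar>net_act \<sigma> d H \<theta> y\<bar> \<le> T + real H * (T * S)"
proof -
  have "\<bar>\<sigma> (preact d H \<theta> i y)\<bar> \<le> S" for i
    by (rule S, rule abs_preact_le[OF T], rule abs_cube_coord_le[OF y])
  then have "\<bar>\<Sum>i=1..H. outw d H \<theta> i * \<sigma> (preact d H \<theta> i y)\<bar> \<le> real (card {1..H}) * (T * S)"
    using T by (intro abs_sum_le_card_mult abs_mult_le_mult) (auto simp: outw_def)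
  moreover have "\<bar>outb d H \<theta>\<bar> \<le> T"
    using T by (simp add: outb_def)
  ultimately show ?thesis
    unfolding net_act_preact by simp
qed

lemma abs_net_act_partial_le:
  assumes T: "\<And>m. \<bar>\<theta> m\<bar> \<le> T" and y: "y \<in> cube d a b"
    and S: "\<And>u. \<bar>u\<bar> \<le> T + real d * (T * (\<bar>a\<bar> + \<bar>b\<bar>)) \<Longrightarrow> \<bar>\<sigma> u\<bar> \<le> S \<and> \<bar>\<sigma>' u\<bar> \<le> S"
  shows "\<bar>net_act_partial \<sigma> \<sigma>' d H \<theta> k y\<bar> \<le> 1 + real H * (S + T * S * (1 + real d * (\<bar>a\<bar> + \<bar>b\<bar>)))"
proof -
  have S_preact: "\<bar>\<sigma> (preact d H \<theta> i y)\<bar> \<le> S \<and> \<bar>\<sigma>' (preact d H \<theta> i y)\<bar> \<le> S" for i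
    by (rule S, rule abs_preact_le[OF T], rule abs_cube_coord_le[OF y])
  have "\<bar>of_bool P\<bar> \<le> (1::real)" for P
    by simp
  moreover have "\<bar>\<Sum>j=1..d. of_bool ((i - 1) * d + j = k) * y j\<bar> \<le> real (card {1..d}) * (1 * (\<bar>a\<bar> + \<bar>b\<bar>))" for i
    using abs_cube_coord_le[OF y] by (intro abs_sum_le_card_mult abs_mult_le_mult) auto
  ultimately have "\<bar>of_bool (H * (d + 1) + i = k) * \<sigma> (preact d H \<theta> i y)
      + outw d H \<theta> i * \<sigma>' (preact d H \<theta> i y)
        * (of_bool (H * d + i = k) + (\<Sum>j=1..d. of_bool ((i - 1) * d + j = k) * y j))\<bar>
      \<le> 1 * S + T * S * (1 + real d * (\<bar>a\<bar> + \<bar>b\<bar>))" for i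
    using S_preact[of i] T[of "H * (d + 1) + i"]
    by (intro order_trans[OF abs_triangle_ineq] add_mono abs_mult_le_mult)
      (auto simp: outw_def intro: order_trans[OF abs_triangle_ineq] add_mono)
  then have "\<bar>\<Sum>i=1..H. of_bool (H * (d + 1) + i = k) * \<sigma> (preact d H \<theta> i y)
      + outw d H \<theta> i * \<sigma>' (preact d H \<theta> i y)
        * (of_bool (H * d + i = k) + (\<Sum>j=1..d. of_bool ((i - 1) * d + j = k) * y j))\<bar>
      \<le> real (card {1..H}) * (1 * S + T * S * (1 + real d * (\<bar>a\<bar> + \<bar>b\<bar>)))"
    by (rule abs_sum_le_card_mult)
  then show ?thesis
    unfolding net_act_partial_def by (intro order_trans[OF abs_triangle_ineq] add_mono) auto
qed

lemma abs_preact_diff_le: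
  assumes i: "i \<in> {1..H}" and y: "y \<in> cube d a b"
  shows "\<bar>preact d H \<theta>1 i y - preact d H \<theta>2 i y\<bar> \<le> (1 + real d * (\<bar>a\<bar> + \<bar>b\<bar>)) * pnorm_dist d H \<theta>1 \<theta>2"
proof -
  let ?\<delta> = "pnorm_dist d H \<theta>1 \<theta>2"
  have "\<bar>bia d H \<theta>1 i - bia d H \<theta>2 i\<bar> \<le> ?\<delta>"
    unfolding bia_def by (rule abs_diff_le_pnorm_dist[OF bias_index_mem[OF i]])
  moreover have "\<bar>\<Sum>j=1..d. (wgt d \<theta>1 i j - wgt d \<theta>2 i j) * y j\<bar> \<le> real (card {1..d}) * (?\<delta> * (\<bar>a\<bar> + \<bar>b\<bar>))"
    using abs_diff_le_pnorm_dist[OF weight_index_mem[OF i]] abs_cube_coord_le[OF y]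
    by (intro abs_sum_le_card_mult abs_mult_le_mult) (auto simp: wgt_def)
  moreover have "preact d H \<theta>1 i y - preact d H \<theta>2 i y
      = (bia d H \<theta>1 i - bia d H \<theta>2 i) + (\<Sum>j=1..d. (wgt d \<theta>1 i j - wgt d \<theta>2 i j) * y j)"
    unfolding preact_def by (simp add: sum_subtractf left_diff_distrib)
  ultimately show ?thesis
    by (simp add: algebra_simps)
qed

lemma borel_measurable_preact: "(\<lambda>y. preact d H \<theta> i y) \<in> borel_measurable (leb d)"
  unfolding preact_def
  by (intro borel_measurable_add borel_measurable_sum borel_measurable_times borel_measurable_const
      borel_measurable_leb_coord) auto

lemma borel_measurable_net_act:
  "\<sigma> \<in> borel_measurable borel \<Longrightarrow> (\<lambda>y. net_act \<sigma> d H \<theta> y) \<in> borel_measurable (leb d)"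
  unfolding net_act_preact
  by (intro borel_measurable_add borel_measurable_sum borel_measurable_times borel_measurable_const
      measurable_compose[OF borel_measurable_preact])

lemma borel_measurable_net_act_partial:
  "\<sigma> \<in> borel_measurable borel \<Longrightarrow> \<sigma>' \<in> borel_measurable borel \<Longrightarrow>
    (\<lambda>y. net_act_partial \<sigma> \<sigma>' d H \<theta> k y) \<in> borel_measurable (leb d)"
  unfolding net_act_partial_def
  by (intro borel_measurable_add borel_measurable_sum borel_measurable_times borel_measurable_const
      measurable_compose[OF borel_measurable_preact] borel_measurable_leb_coord) auto

section \<open>Functions Lipschitz in the parameter uniformly on the cube\<close>

definition unif_lipschitz_bounded :: "('p \<Rightarrow> 'p \<Rightarrow> real) \<Rightarrow> 'p set \<Rightarrow> 'y set \<Rightarrow> ('p \<Rightarrow> 'y \<Rightarrow> real) \<Rightarrow> bool"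
  where "unif_lipschitz_bounded \<delta> U Y h \<longleftrightarrow>
    (\<exists>L M. (\<forall>\<theta>1\<in>U. \<forall>\<theta>2\<in>U. \<forall>y\<in>Y. \<bar>h \<theta>1 y - h \<theta>2 y\<bar> \<le> L * \<delta> \<theta>1 \<theta>2) \<and> (\<forall>\<theta>\<in>U. \<forall>y\<in>Y. \<bar>h \<theta> y\<bar> \<le> M))"

lemma unif_lipschitz_boundedI:
  assumes "\<And>\<theta>1 \<theta>2 y. \<theta>1 \<in> U \<Longrightarrow> \<theta>2 \<in> U \<Longrightarrow> y \<in> Y \<Longrightarrow> \<bar>h \<theta>1 y - h \<theta>2 y\<bar> \<le> L * \<delta> \<theta>1 \<theta>2"
    and "\<And>\<theta> y. \<theta> \<in> U \<Longrightarrow> y \<in> Y \<Longrightarrow> \<bar>h \<theta> y\<bar> \<le> M"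
  shows "unif_lipschitz_bounded \<delta> U Y h"
  using assms unfolding unif_lipschitz_bounded_def by blast

lemma unif_lipschitz_bounded_const:
  "(\<And>y. y \<in> Y \<Longrightarrow> \<bar>c y\<bar> \<le> M) \<Longrightarrow> unif_lipschitz_bounded \<delta> U Y (\<lambda>\<theta> y. c y)"
  by (rule unif_lipschitz_boundedI[where L=0 and M=M]) auto

lemma unif_lipschitz_bounded_constant: "unif_lipschitz_bounded \<delta> U Y (\<lambda>\<theta> y. c)"
  by (rule unif_lipschitz_bounded_const[where M="\<bar>c\<bar>"]) simp

lemma unif_lipschitz_bounded_add:
  assumes "unif_lipschitz_bounded \<delta> U Y h1" "unif_lipschitz_bounded \<delta> U Y h2"
  shows "unif_lipschitz_bounded \<delta> U Y (\<lambda>\<theta> y. h1 \<theta> y + h2 \<theta> y)"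
proof -
  obtain L1 M1 where L1: "\<And>\<theta>1 \<theta>2 y. \<theta>1 \<in> U \<Longrightarrow> \<theta>2 \<in> U \<Longrightarrow> y \<in> Y \<Longrightarrow> \<bar>h1 \<theta>1 y - h1 \<theta>2 y\<bar> \<le> L1 * \<delta> \<theta>1 \<theta>2"
    and M1: "\<And>\<theta> y. \<theta> \<in> U \<Longrightarrow> y \<in> Y \<Longrightarrow> \<bar>h1 \<theta> y\<bar> \<le> M1"
    using assms(1) unfolding unif_lipschitz_bounded_def by blast
  obtain L2 M2 where L2: "\<And>\<theta>1 \<theta>2 y. \<theta>1 \<in> U \<Longrightarrow> \<theta>2 \<in> U \<Longrightarrow> y \<in> Y \<Longrightarrow> \<bar>h2 \<theta>1 y - h2 \<theta>2 y\<bar> \<le> L2 * \<delta> \<theta>1 \<theta>2"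
    and M2: "\<And>\<theta> y. \<theta> \<in> U \<Longrightarrow> y \<in> Y \<Longrightarrow> \<bar>h2 \<theta> y\<bar> \<le> M2"
    using assms(2) unfolding unif_lipschitz_bounded_def by blast
  show ?thesis
  proof (rule unif_lipschitz_boundedI[where L="L1 + L2" and M="M1 + M2"])
    fix \<theta>1 \<theta>2 y assume "\<theta>1 \<in> U" "\<theta>2 \<in> U" "y \<in> Y"
    with L1 L2 show "\<bar>h1 \<theta>1 y + h2 \<theta>1 y - (h1 \<theta>2 y + h2 \<theta>2 y)\<bar> \<le> (L1 + L2) * \<delta> \<theta>1 \<theta>2"
      by (smt (verit, best) distrib_right)
  next
    fix \<theta> y assume "\<theta> \<in> U" "y \<in> Y"
    with M1 M2 show "\<bar>h1 \<theta> y + h2 \<theta> y\<bar> \<le> M1 + M2"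
      by (smt (verit, best))
  qed
qed

lemma unif_lipschitz_bounded_diff:
  assumes "unif_lipschitz_bounded \<delta> U Y h1" "unif_lipschitz_bounded \<delta> U Y h2"
  shows "unif_lipschitz_bounded \<delta> U Y (\<lambda>\<theta> y. h1 \<theta> y - h2 \<theta> y)"
proof -
  have "unif_lipschitz_bounded \<delta> U Y (\<lambda>\<theta> y. - h2 \<theta> y)"
    using assms(2) unfolding unif_lipschitz_bounded_def by (simp add: abs_minus_commute)
  from unif_lipschitz_bounded_add[OF assms(1) this] show ?thesis
    by simp
qed

lemma unif_lipschitz_bounded_mult:
  assumes "unif_lipschitz_bounded \<delta> U Y h1" "unif_lipschitz_bounded \<delta> U Y h2"
  shows "unif_lipschitz_bounded \<delta> U Y (\<lambda>\<theta> y. h1 \<theta> y * h2 \<theta> y)"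
proof -
  obtain L1 M1 where L1: "\<And>\<theta>1 \<theta>2 y. \<theta>1 \<in> U \<Longrightarrow> \<theta>2 \<in> U \<Longrightarrow> y \<in> Y \<Longrightarrow> \<bar>h1 \<theta>1 y - h1 \<theta>2 y\<bar> \<le> L1 * \<delta> \<theta>1 \<theta>2"
    and M1: "\<And>\<theta> y. \<theta> \<in> U \<Longrightarrow> y \<in> Y \<Longrightarrow> \<bar>h1 \<theta> y\<bar> \<le> M1"
    using assms(1) unfolding unif_lipschitz_bounded_def by blast
  obtain L2 M2 where L2: "\<And>\<theta>1 \<theta>2 y. \<theta>1 \<in> U \<Longrightarrow> \<theta>2 \<in> U \<Longrightarrow> y \<in> Y \<Longrightarrow> \<bar>h2 \<theta>1 y - h2 \<theta>2 y\<bar> \<le> L2 * \<delta> \<theta>1 \<theta>2"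
    and M2: "\<And>\<theta> y. \<theta> \<in> U \<Longrightarrow> y \<in> Y \<Longrightarrow> \<bar>h2 \<theta> y\<bar> \<le> M2"
    using assms(2) unfolding unif_lipschitz_bounded_def by blast
  show ?thesis
  proof (rule unif_lipschitz_boundedI[where L="M1 * L2 + M2 * L1" and M="M1 * M2"])
    fix \<theta>1 \<theta>2 y assume *: "\<theta>1 \<in> U" "\<theta>2 \<in> U" "y \<in> Y"
    have "\<bar>h1 \<theta>1 y * h2 \<theta>1 y - h1 \<theta>2 y * h2 \<theta>2 y\<bar> \<le> M1 * (L2 * \<delta> \<theta>1 \<theta>2) + M2 * (L1 * \<delta> \<theta>1 \<theta>2)"
      by (rule abs_diff_mult_le[OF L1[OF *] L2[OF *] M1 M2]) (use * in auto)
    then show "\<bar>h1 \<theta>1 y * h2 \<theta>1 y - h1 \<theta>2 y * h2 \<theta>2 y\<bar> \<le> (M1 * L2 + M2 * L1) * \<delta> \<theta>1 \<theta>2"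
      by (simp add: algebra_simps)
  qed (use M1 M2 in \<open>auto intro: abs_mult_le_mult\<close>)
qed

lemma unif_lipschitz_bounded_sum:
  assumes "finite A" "\<And>i. i \<in> A \<Longrightarrow> unif_lipschitz_bounded \<delta> U Y (h i)"
  shows "unif_lipschitz_bounded \<delta> U Y (\<lambda>\<theta> y. \<Sum>i\<in>A. h i \<theta> y)"
  using assms
proof (induction A rule: finite_induct)
  case empty
  then show ?case
    using unif_lipschitz_bounded_const[of Y "\<lambda>_. 0" 0] by simp
next
  case (insert i A)
  then show ?case
    by (simp add: unif_lipschitz_bounded_add)
qed

lemma unif_lipschitz_bounded_max_0:
  assumes "unif_lipschitz_bounded \<delta> U Y h"
  shows "unif_lipschitz_bounded \<delta> U Y (\<lambda>\<theta> y. max (h \<theta> y) 0)"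
proof -
  obtain L M where "\<And>\<theta>1 \<theta>2 y. \<theta>1 \<in> U \<Longrightarrow> \<theta>2 \<in> U \<Longrightarrow> y \<in> Y \<Longrightarrow> \<bar>h \<theta>1 y - h \<theta>2 y\<bar> \<le> L * \<delta> \<theta>1 \<theta>2"
    and "\<And>\<theta> y. \<theta> \<in> U \<Longrightarrow> y \<in> Y \<Longrightarrow> \<bar>h \<theta> y\<bar> \<le> M"
    using assms unfolding unif_lipschitz_bounded_def by blast
  then show ?thesis
    by (intro unif_lipschitz_boundedI[where L=L and M=M]) (smt (verit))+
qed

lemma unif_lipschitz_bounded_coord:
  assumes "m \<in> {1..pdim d H}"
  shows "unif_lipschitz_bounded (pnorm_dist d H) (pball d H \<theta>0 \<epsilon>) Y (\<lambda>\<theta> y. \<theta> m)"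
proof (rule unif_lipschitz_boundedI[where L=1 and M="\<bar>\<theta>0 m\<bar> + \<epsilon>"])
  show "\<bar>\<theta>1 m - \<theta>2 m\<bar> \<le> 1 * pnorm_dist d H \<theta>1 \<theta>2" for \<theta>1 \<theta>2 :: "nat \<Rightarrow> real"
    using abs_diff_le_pnorm_dist[OF assms] by simp
  show "\<bar>\<theta> m\<bar> \<le> \<bar>\<theta>0 m\<bar> + \<epsilon>" if "\<theta> \<in> pball d H \<theta>0 \<epsilon>" for \<theta> :: "nat \<Rightarrow> real"
    using abs_diff_le_pnorm_dist[OF assms, of \<theta>0 \<theta>] that unfolding pball_def by auto
qed

lemma unif_lipschitz_bounded_preact:
  assumes "i \<in> {1..H}"
  shows "unif_lipschitz_bounded (pnorm_dist d H) (pball d H \<theta>0 \<epsilon>) (cube d a b) (\<lambda>\<theta> y. preact d H \<theta> i y)"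
  unfolding preact_def bia_def wgt_def
  using assms
  by (intro unif_lipschitz_bounded_add unif_lipschitz_bounded_coord bias_index_mem
      unif_lipschitz_bounded_sum unif_lipschitz_bounded_mult weight_index_mem
      unif_lipschitz_bounded_const[OF abs_cube_coord_le]) auto

lemma unif_lipschitz_bounded_relu_net:
  "unif_lipschitz_bounded (pnorm_dist d H) (pball d H \<theta>0 \<epsilon>) (cube d a b)
    (\<lambda>\<theta> y. net_act (\<lambda>x. max x 0) d H \<theta> y)"
  unfolding net_act_preact outb_def outw_def
  by (intro unif_lipschitz_bounded_add unif_lipschitz_bounded_coord pdim_mem unif_lipschitz_bounded_sum
      unif_lipschitz_bounded_mult outw_index_mem unif_lipschitz_bounded_max_0 unif_lipschitz_bounded_preact)
    auto

section \<open>Activation patterns of a neuron\<close>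

lemma borel_measurable_indicator_preact:
  "(\<lambda>y. indicat_real {0<..} (preact d H \<theta> i y)) \<in> borel_measurable (leb d)"
  using measurable_compose[OF borel_measurable_preact borel_measurable_indicator[of "{0<..}"]] by simp

lemma set_integrable_indicator_preact_diff:
  "a \<le> b \<Longrightarrow> set_integrable (leb d) (cube d a b)
     (\<lambda>y. \<bar>indicat_real {0<..} (preact d H \<theta>1 i y) - indicat_real {0<..} (preact d H \<theta>2 i y)\<bar>)"
  using borel_measurable_indicator_preact
  by (intro set_integrable_cube[where B=1]) (auto split: split_indicator)

text \<open>Near a parameter whose neuron has a nonzero inner weight, the activation pattern of that
  neuron can only change on a slab of width proportional to the parameter change.\<close>

lemma set_integral_indicator_preact_diff_le_weight:
  assumes "a \<le> b" and i: "i \<in> {1..H}" and j0: "j0 \<in> {1..d}" and w0: "wgt d \<theta>0 i j0 \<noteq> 0"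
    and near: "pnorm_dist d H \<theta>0 \<theta>1 < \<bar>wgt d \<theta>0 i j0\<bar> / 2"
  shows "(LINT y:cube d a b|leb d. \<bar>indicat_real {0<..} (preact d H \<theta>1 i y) - indicat_real {0<..} (preact d H \<theta>2 i y)\<bar>)
    \<le> 4 * (1 + real d * (\<bar>a\<bar> + \<bar>b\<bar>)) / \<bar>wgt d \<theta>0 i j0\<bar> * (b - a) ^ (d - 1) * pnorm_dist d H \<theta>1 \<theta>2"
proof -
  define C where "C = 1 + real d * (\<bar>a\<bar> + \<bar>b\<bar>)"
  let ?\<delta> = "pnorm_dist d H \<theta>1 \<theta>2"
  have C\<delta>: "0 \<le> C * ?\<delta>"
    unfolding C_def using pnorm_dist_nonneg by simp
  have "\<bar>wgt d \<theta>0 i j0 - wgt d \<theta>1 i j0\<bar> \<le> pnorm_dist d H \<theta>0 \<theta>1"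
    unfolding wgt_def by (rule abs_diff_le_pnorm_dist[OF weight_index_mem[OF i j0]])
  then have w1: "\<bar>wgt d \<theta>0 i j0\<bar> / 2 \<le> \<bar>wgt d \<theta>1 i j0\<bar>"
    using near by linarith
  define S where "S = {y \<in> cube d a b. \<bar>bia d H \<theta>1 i + (\<Sum>j=1..d. wgt d \<theta>1 i j * y j)\<bar> \<le> C * ?\<delta>}"
  have S_sets: "S \<in> sets (leb d)"
    using sets_PiM_slab unfolding S_def leb_def by auto
  have "(LINT y:cube d a b|leb d. \<bar>indicat_real {0<..} (preact d H \<theta>1 i y) - indicat_real {0<..} (preact d H \<theta>2 i y)\<bar>)
      \<le> (LINT y:cube d a b|leb d. indicat_real S y)"
  proof (rule set_integral_mono[OF set_integrable_indicator_preact_diff[OF \<open>a \<le> b\<close>]])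
    show "set_integrable (leb d) (cube d a b) (indicat_real S)"
      using S_sets by (intro set_integrable_cube[OF \<open>a \<le> b\<close>, where B=1]) (auto split: split_indicator)
    fix y assume y: "y \<in> cube d a b"
    have "\<bar>preact d H \<theta>1 i y - preact d H \<theta>2 i y\<bar> \<le> C * ?\<delta>"
      unfolding C_def by (rule abs_preact_diff_le[OF i y])
    then show "\<bar>indicat_real {0<..} (preact d H \<theta>1 i y) - indicat_real {0<..} (preact d H \<theta>2 i y)\<bar> \<le> indicat_real S y"
      using abs_indicator_pos_diff_le[of "preact d H \<theta>1 i y" "preact d H \<theta>2 i y"] y
      by (auto simp: S_def preact_def split: split_indicator)
  qed
  also have "(LINT y:cube d a b|leb d. indicat_real S y) = measure (leb d) S"
    using S_sets sets.sets_into_space unfolding set_lebesgue_integral_def S_def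
    by (simp add: indicator_inter_arith[symmetric] Int_absorb1)
  also have "\<dots> \<le> 2 * (C * ?\<delta> / \<bar>wgt d \<theta>1 i j0\<bar>) * (b - a) ^ (d - 1)"
    unfolding S_def using w1 w0 by (intro measure_leb_slab_le[OF j0 _ C\<delta> \<open>a \<le> b\<close>]) auto
  also have "\<dots> \<le> 2 * (C * ?\<delta> / (\<bar>wgt d \<theta>0 i j0\<bar> / 2)) * (b - a) ^ (d - 1)"
    using w1 w0 C\<delta> \<open>a \<le> b\<close> by (intro mult_right_mono mult_left_mono divide_left_mono) auto
  finally show ?thesis
    unfolding C_def by (simp add: field_simps)
qed

lemma indicator_preact_locally_constant_bias:
  assumes i: "i \<in> {1..H}" and y: "y \<in> cube d a b"
    and w0: "\<And>j. j \<in> {1..d} \<Longrightarrow> wgt d \<theta>0 i j = 0"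
    and near: "pnorm_dist d H \<theta>0 \<theta> < \<bar>bia d H \<theta>0 i\<bar> / (2 * (1 + real d * (\<bar>a\<bar> + \<bar>b\<bar>)))"
  shows "indicat_real {0<..} (preact d H \<theta> i y) = indicat_real {0<..} (bia d H \<theta>0 i)"
proof -
  define C where "C = 1 + real d * (\<bar>a\<bar> + \<bar>b\<bar>)"
  have C: "1 \<le> C"
    unfolding C_def by simp
  have "preact d H \<theta>0 i y = bia d H \<theta>0 i"
    unfolding preact_def using w0 by simp
  then have "\<bar>preact d H \<theta> i y - bia d H \<theta>0 i\<bar> \<le> C * pnorm_dist d H \<theta> \<theta>0"
    using abs_preact_diff_le[OF i y, of \<theta> \<theta>0] unfolding C_def by simp
  also have "\<dots> < C * (\<bar>bia d H \<theta>0 i\<bar> / (2 * C))"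
    using near C by (intro mult_strict_left_mono) (simp_all only: C_def pnorm_dist_commute)
  also have "\<dots> = \<bar>bia d H \<theta>0 i\<bar> / 2"
    using C by simp
  finally show ?thesis
    by (auto simp: abs_real_def split: split_indicator if_splits)
qed

lemma set_integral_indicator_preact_diff_le:
  assumes "a \<le> b" and i: "i \<in> {1..H}" and "i \<notin> degenerate d H \<theta>0"
  shows "\<exists>\<epsilon>>0. \<exists>K. \<forall>\<theta>1\<in>pball d H \<theta>0 \<epsilon>. \<forall>\<theta>2\<in>pball d H \<theta>0 \<epsilon>.
    (LINT y:cube d a b|leb d. \<bar>indicat_real {0<..} (preact d H \<theta>1 i y) - indicat_real {0<..} (preact d H \<theta>2 i y)\<bar>)
      \<le> K * pnorm_dist d H \<theta>1 \<theta>2"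
proof (cases "\<exists>j\<in>{1..d}. wgt d \<theta>0 i j \<noteq> 0")
  case True
  then obtain j0 where j0: "j0 \<in> {1..d}" "wgt d \<theta>0 i j0 \<noteq> 0"
    by blast
  let ?\<epsilon> = "\<bar>wgt d \<theta>0 i j0\<bar> / 2"
  let ?K = "4 * (1 + real d * (\<bar>a\<bar> + \<bar>b\<bar>)) / \<bar>wgt d \<theta>0 i j0\<bar> * (b - a) ^ (d - 1)"
  have "(LINT y:cube d a b|leb d. \<bar>indicat_real {0<..} (preact d H \<theta>1 i y) - indicat_real {0<..} (preact d H \<theta>2 i y)\<bar>)
      \<le> ?K * pnorm_dist d H \<theta>1 \<theta>2" if "\<theta>1 \<in> pball d H \<theta>0 ?\<epsilon>" for \<theta>1 \<theta>2
    using that by (intro set_integral_indicator_preact_diff_le_weight[OF \<open>a \<le> b\<close> i j0]) (simp add: pball_def)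
  then show ?thesis
    using j0(2) by (intro exI[of _ ?\<epsilon>] conjI exI[of _ ?K]) auto
next
  case False
  then have w0: "\<And>j. j \<in> {1..d} \<Longrightarrow> wgt d \<theta>0 i j = 0"
    by auto
  with assms(2,3) have "bia d H \<theta>0 i \<noteq> 0"
    by (auto simp: degenerate_def)
  then have "0 < \<bar>bia d H \<theta>0 i\<bar> / (2 * (1 + real d * (\<bar>a\<bar> + \<bar>b\<bar>)))"
    by (simp add: add_pos_nonneg)
  moreover have "(LINT y:cube d a b|leb d. \<bar>indicat_real {0<..} (preact d H \<theta>1 i y) - indicat_real {0<..} (preact d H \<theta>2 i y)\<bar>) = 0"
    if "\<theta>1 \<in> pball d H \<theta>0 (\<bar>bia d H \<theta>0 i\<bar> / (2 * (1 + real d * (\<bar>a\<bar> + \<bar>b\<bar>))))"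
      "\<theta>2 \<in> pball d H \<theta>0 (\<bar>bia d H \<theta>0 i\<bar> / (2 * (1 + real d * (\<bar>a\<bar> + \<bar>b\<bar>))))" for \<theta>1 \<theta>2
    using indicator_preact_locally_constant_bias[OF i _ w0] that unfolding pball_def
    by (subst set_lebesgue_integral_cong[OF sets_leb_cube, where g="\<lambda>_. 0"]) auto
  ultimately show ?thesis
    by (intro exI[of _ "\<bar>bia d H \<theta>0 i\<bar> / (2 * (1 + real d * (\<bar>a\<bar> + \<bar>b\<bar>)))"] conjI exI[of _ 0]) auto
qed

lemma relu_approx_tendsto:
  assumes "\<forall>x. (\<lambda>r. \<bar>R r x - max x 0\<bar> + \<bar>R' r x - indicator {0<..} x\<bar>) \<longlonglongrightarrow> 0"
  shows "(\<lambda>r. R r x) \<longlonglongrightarrow> max x 0" and "(\<lambda>r. R' r x) \<longlonglongrightarrow> indicat_real {0<..} x"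
proof -
  have "(\<lambda>r. R r x - max x 0) \<longlonglongrightarrow> 0"
    by (rule Lim_null_comparison[OF always_eventually assms[rule_format, of x]]) auto
  then show "(\<lambda>r. R r x) \<longlonglongrightarrow> max x 0"
    by (rule LIM_zero_cancel)
  have "(\<lambda>r. R' r x - indicator {0<..} x) \<longlonglongrightarrow> 0"
    by (rule Lim_null_comparison[OF always_eventually assms[rule_format, of x]]) auto
  then show "(\<lambda>r. R' r x) \<longlonglongrightarrow> indicat_real {0<..} x"
    by (rule LIM_zero_cancel)
qed

lemma relu_approx_uniformly_bounded:
  fixes R R' :: "nat \<Rightarrow> real \<Rightarrow> real"
  assumes der: "\<forall>r\<ge>1. \<forall>x. (R r has_real_derivative R' r x) (at x)"
    and R0: "(\<lambda>r. R r 0) \<longlonglongrightarrow> l"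
    and R'_bound: "\<forall>x. \<exists>C. \<forall>r\<ge>1. \<forall>y\<in>{-\<bar>x\<bar>..\<bar>x\<bar>}. \<bar>R' r y\<bar> \<le> C"
  obtains S where "\<And>r u. \<bar>u\<bar> \<le> Z \<Longrightarrow> \<bar>R (Suc r) u\<bar> \<le> S \<and> \<bar>R' (Suc r) u\<bar> \<le> S"
proof -
  have "Bseq (\<lambda>r. R (Suc r) 0)"
    using LIMSEQ_Suc[OF R0] by (intro convergent_imp_Bseq) (auto simp: convergent_def)
  then obtain B where B: "\<And>r. \<bar>R (Suc r) 0\<bar> \<le> B"
    using BseqE real_norm_def by metis
  have R'_bound': "\<exists>C. \<forall>r. \<forall>y\<in>{-\<bar>x\<bar>..\<bar>x\<bar>}. \<bar>R' (Suc r) y\<bar> \<le> C" for x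
  proof -
    obtain C where "\<forall>r\<ge>1. \<forall>y\<in>{-\<bar>x\<bar>..\<bar>x\<bar>}. \<bar>R' r y\<bar> \<le> C"
      using R'_bound by blast
    then show ?thesis
      by auto
  qed
  show thesis
  proof (rule uniformly_bounded_on_interval[where g="\<lambda>r. R (Suc r)" and g'="\<lambda>r. R' (Suc r)", OF _ B R'_bound'])
    show "(R (Suc r) has_real_derivative R' (Suc r) x) (at x)" for r x
      using der by simp
  qed (rule that)
qed

section \<open>The risk and its generalized gradient\<close>

locale risk_setting =
  fixes d H :: nat and a b :: real and f p :: "(nat \<Rightarrow> real) \<Rightarrow> real"
  assumes a_less_b: "a < b"
    and f_cont: "continuous_on (cube d a b) f"
    and p_meas: "p \<in> borel_measurable (leb d)"
    and p_bounded: "bounded (p ` cube d a b)"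
begin

lemma a_le_b: "a \<le> b"
  using a_less_b by simp

definition f_ext :: "(nat \<Rightarrow> real) \<Rightarrow> real" where
  "f_ext y = f (cube_clamp d a b y)"

lemma f_ext_eq: "y \<in> cube d a b \<Longrightarrow> f_ext y = f y"
  by (simp add: f_ext_def cube_clamp_id)

lemma borel_measurable_f_ext: "f_ext \<in> borel_measurable (leb d)"
  unfolding f_ext_def by (rule borel_measurable_clamp_extension[OF f_cont a_le_b])

lemma f_ext_bounded:
  obtains F where "\<And>y. y \<in> cube d a b \<Longrightarrow> \<bar>f_ext y\<bar> \<le> F"
proof -
  have "compact (f ` cube d a b)"
    by (rule compact_continuous_image[OF f_cont compact_cube])
  then obtain F where "\<forall>x\<in>f ` cube d a b. norm x \<le> F"
    using compact_imp_bounded bounded_iff by metis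
  then show thesis
    by (intro that[of F]) (simp add: f_ext_eq)
qed

lemma p_bound:
  obtains P where "\<And>y. y \<in> cube d a b \<Longrightarrow> \<bar>p y\<bar> \<le> P"
  using p_bounded unfolding bounded_iff by auto

lemma risk_act_eq_set_integral:
  "risk_act \<sigma> d H a b f p \<theta> = (LINT y:cube d a b|leb d. (f_ext y - net_act \<sigma> d H \<theta> y)\<^sup>2 * p y)"
  unfolding risk_act_def by (rule set_lebesgue_integral_cong[OF sets_leb_cube]) (simp add: f_ext_eq)

definition risk_grad_integrand :: "(real \<Rightarrow> real) \<Rightarrow> (real \<Rightarrow> real) \<Rightarrow> (nat \<Rightarrow> real) \<Rightarrow> nat \<Rightarrow>
    (nat \<Rightarrow> real) \<Rightarrow> real" where
  "risk_grad_integrand \<sigma> \<sigma>' \<theta> k y = 2 * (net_act \<sigma> d H \<theta> y - f_ext y) * net_act_partial \<sigma> \<sigma>' d H \<theta> k y * p y"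

definition risk_grad :: "(real \<Rightarrow> real) \<Rightarrow> (real \<Rightarrow> real) \<Rightarrow> (nat \<Rightarrow> real) \<Rightarrow> nat \<Rightarrow> real" where
  "risk_grad \<sigma> \<sigma>' \<theta> k = (LINT y:cube d a b|leb d. risk_grad_integrand \<sigma> \<sigma>' \<theta> k y)"

abbreviation relu_risk_grad :: "(nat \<Rightarrow> real) \<Rightarrow> nat \<Rightarrow> real" where
  "relu_risk_grad \<equiv> risk_grad (\<lambda>x. max x 0) (indicat_real {0<..})"

lemma borel_measurable_risk_grad_integrand:
  assumes "\<sigma> \<in> borel_measurable borel" "\<sigma>' \<in> borel_measurable borel"
  shows "risk_grad_integrand \<sigma> \<sigma>' \<theta> k \<in> borel_measurable (leb d)"
  unfolding risk_grad_integrand_def[abs_def]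
  using borel_measurable_f_ext p_meas borel_measurable_net_act[OF assms(1)]
    borel_measurable_net_act_partial[OF assms] by measurable

lemma abs_risk_grad_integrand_le:
  assumes T: "\<And>m. \<bar>\<theta> m\<bar> \<le> T" and y: "y \<in> cube d a b"
    and S: "\<And>u. \<bar>u\<bar> \<le> T + real d * (T * (\<bar>a\<bar> + \<bar>b\<bar>)) \<Longrightarrow> \<bar>\<sigma> u\<bar> \<le> S \<and> \<bar>\<sigma>' u\<bar> \<le> S"
    and F: "\<bar>f_ext y\<bar> \<le> F" and P: "\<bar>p y\<bar> \<le> P"
  shows "\<bar>risk_grad_integrand \<sigma> \<sigma>' \<theta> k y\<bar>
    \<le> 2 * (T + real H * (T * S) + F) * (1 + real H * (S + T * S * (1 + real d * (\<bar>a\<bar> + \<bar>b\<bar>)))) * P"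
proof -
  have "\<bar>net_act \<sigma> d H \<theta> y\<bar> \<le> T + real H * (T * S)"
    by (rule abs_net_act_le[OF T y]) (use S in blast)
  moreover have "\<bar>net_act_partial \<sigma> \<sigma>' d H \<theta> k y\<bar> \<le> 1 + real H * (S + T * S * (1 + real d * (\<bar>a\<bar> + \<bar>b\<bar>)))"
    by (rule abs_net_act_partial_le[OF T y S])
  ultimately show ?thesis
    unfolding risk_grad_integrand_def using F P
    by (intro abs_mult_le_mult abs_triangle_ineq4[THEN order_trans] add_mono) auto
qed

lemma risk_grad_integrand_tendsto:
  assumes "\<And>x. (\<lambda>r. \<sigma>s r x) \<longlonglongrightarrow> \<sigma> x" "\<And>x. (\<lambda>r. \<sigma>s' r x) \<longlonglongrightarrow> \<sigma>' x"
  shows "(\<lambda>r. risk_grad_integrand (\<sigma>s r) (\<sigma>s' r) \<theta> k y) \<longlonglongrightarrow> risk_grad_integrand \<sigma> \<sigma>' \<theta> k y"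
  unfolding risk_grad_integrand_def net_act_preact net_act_partial_def
  by (intro tendsto_mult tendsto_add tendsto_diff tendsto_sum tendsto_const assms)

lemma set_integrable_squared_loss:
  assumes \<sigma>: "continuous_on UNIV \<sigma>" and T: "\<And>m. \<bar>\<theta> m\<bar> \<le> T"
  shows "set_integrable (leb d) (cube d a b) (\<lambda>y. (f_ext y - net_act \<sigma> d H \<theta> y)\<^sup>2 * p y)"
proof -
  obtain F where F: "\<And>y. y \<in> cube d a b \<Longrightarrow> \<bar>f_ext y\<bar> \<le> F"
    using f_ext_bounded by blast
  obtain P where P: "\<And>y. y \<in> cube d a b \<Longrightarrow> \<bar>p y\<bar> \<le> P"
    using p_bound by blast
  obtain S where S: "\<And>u. \<bar>u\<bar> \<le> T + real d * (T * (\<bar>a\<bar> + \<bar>b\<bar>)) \<Longrightarrow> \<bar>\<sigma> u\<bar> \<le> S"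
    using continuous_bounded_on_interval[OF \<sigma>] by blast
  show ?thesis
  proof (rule set_integrable_cube[OF a_le_b, where B="(T + real H * (T * S) + F)\<^sup>2 * P"])
    show "(\<lambda>y. (f_ext y - net_act \<sigma> d H \<theta> y)\<^sup>2 * p y) \<in> borel_measurable (leb d)"
      using borel_measurable_f_ext p_meas borel_measurable_net_act[OF borel_measurable_continuous_onI[OF \<sigma>]]
      by measurable
    fix y assume y: "y \<in> cube d a b"
    have "\<bar>net_act \<sigma> d H \<theta> y\<bar> \<le> T + real H * (T * S)"
      by (rule abs_net_act_le[OF T y S])
    then show "\<bar>(f_ext y - net_act \<sigma> d H \<theta> y)\<^sup>2 * p y\<bar> \<le> (T + real H * (T * S) + F)\<^sup>2 * P"
      unfolding power2_eq_square using F[OF y] P[OF y]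
      by (intro abs_mult_le_mult) (auto intro: abs_triangle_ineq4[THEN order_trans])
  qed
qed

lemma risk_grad_integrand_shift_bounded:
  assumes \<sigma>: "continuous_on UNIV \<sigma>" and \<sigma>': "continuous_on UNIV \<sigma>'" and T: "\<And>m. \<bar>\<theta> m\<bar> \<le> T"
  obtains C where
    "\<And>t y. \<bar>t\<bar> \<le> 1 \<Longrightarrow> y \<in> cube d a b \<Longrightarrow> \<bar>risk_grad_integrand \<sigma> \<sigma>' (\<theta>(k := \<theta> k + t)) k y\<bar> \<le> C"
proof -
  obtain F where F: "\<And>y. y \<in> cube d a b \<Longrightarrow> \<bar>f_ext y\<bar> \<le> F"
    using f_ext_bounded by blast
  obtain P where P: "\<And>y. y \<in> cube d a b \<Longrightarrow> \<bar>p y\<bar> \<le> P"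
    using p_bound by blast
  define Z where "Z = T + 1 + real d * ((T + 1) * (\<bar>a\<bar> + \<bar>b\<bar>))"
  obtain S1 where S1: "\<And>u. \<bar>u\<bar> \<le> Z \<Longrightarrow> \<bar>\<sigma> u\<bar> \<le> S1"
    using continuous_bounded_on_interval[OF \<sigma>] by blast
  obtain S2 where S2: "\<And>u. \<bar>u\<bar> \<le> Z \<Longrightarrow> \<bar>\<sigma>' u\<bar> \<le> S2"
    using continuous_bounded_on_interval[OF \<sigma>'] by blast
  have S: "\<bar>\<sigma> u\<bar> \<le> max S1 S2 \<and> \<bar>\<sigma>' u\<bar> \<le> max S1 S2" if "\<bar>u\<bar> \<le> Z" for u
    using S1[OF that] S2[OF that] by linarith
  show thesis
  proof (rule that)
    fix t :: real and y assume t: "\<bar>t\<bar> \<le> 1" and y: "y \<in> cube d a b"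
    have \<theta>_bound: "\<bar>(\<theta>(k := \<theta> k + t)) m\<bar> \<le> T + 1" for m
      using T[of m] t by (cases "m = k") auto
    show "\<bar>risk_grad_integrand \<sigma> \<sigma>' (\<theta>(k := \<theta> k + t)) k y\<bar> \<le> 2 * (T + 1 + real H * ((T + 1) * max S1 S2) + F)
      * (1 + real H * (max S1 S2 + (T + 1) * max S1 S2 * (1 + real d * (\<bar>a\<bar> + \<bar>b\<bar>)))) * P"
      by (rule abs_risk_grad_integrand_le[OF \<theta>_bound y _ F[OF y] P[OF y]]) (use S in \<open>simp add: Z_def\<close>)
  qed
qed

lemma risk_act_has_partial_derivative:
  assumes \<sigma>: "\<And>x. (\<sigma> has_real_derivative \<sigma>' x) (at x)" and \<sigma>': "continuous_on UNIV \<sigma>'"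
    and T: "\<And>m. \<bar>\<theta> m\<bar> \<le> T"
  shows "((\<lambda>t. risk_act \<sigma> d H a b f p (\<theta>(k := \<theta> k + t))) has_real_derivative risk_grad \<sigma> \<sigma>' \<theta> k) (at 0)"
proof -
  let ?\<theta> = "\<lambda>t. \<theta>(k := \<theta> k + t)"
  have \<sigma>_cont: "continuous_on UNIV \<sigma>"
    using \<sigma> by (meson DERIV_isCont continuous_at_imp_continuous_on)
  obtain C where C: "\<And>t y. \<bar>t\<bar> \<le> 1 \<Longrightarrow> y \<in> cube d a b \<Longrightarrow> \<bar>risk_grad_integrand \<sigma> \<sigma>' (?\<theta> t) k y\<bar> \<le> C"
    by (rule risk_grad_integrand_shift_bounded[OF \<sigma>_cont \<sigma>' T]) (rule that)
  have "((\<lambda>t. LINT y|leb d. indicator (cube d a b) y * ((f_ext y - net_act \<sigma> d H (?\<theta> t) y)\<^sup>2 * p y))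
      has_real_derivative (LINT y|leb d. indicator (cube d a b) y * risk_grad_integrand \<sigma> \<sigma>' (?\<theta> 0) k y)) (at 0)"
  proof (rule integral_has_real_derivative_dominated[where w="\<lambda>y. indicator (cube d a b) y * C"])
    show "(\<lambda>y. indicator (cube d a b) y * ((f_ext y - net_act \<sigma> d H (?\<theta> t) y)\<^sup>2 * p y)) \<in> borel_measurable (leb d)"
      for t
      using sets_leb_cube[of d a b] borel_measurable_f_ext p_meas
        borel_measurable_net_act[OF borel_measurable_continuous_onI[OF \<sigma>_cont]] by measurable
    show "(\<lambda>y. indicator (cube d a b) y * risk_grad_integrand \<sigma> \<sigma>' (?\<theta> 0) k y) \<in> borel_measurable (leb d)"
      using sets_leb_cube[of d a b] borel_measurable_risk_grad_integrand[OF
        borel_measurable_continuous_onI[OF \<sigma>_cont] borel_measurable_continuous_onI[OF \<sigma>']] by measurable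
    show "((\<lambda>s. indicator (cube d a b) y * ((f_ext y - net_act \<sigma> d H (?\<theta> s) y)\<^sup>2 * p y))
        has_real_derivative indicator (cube d a b) y * risk_grad_integrand \<sigma> \<sigma>' (?\<theta> t) k y) (at t)" for y t
      unfolding risk_grad_integrand_def by (rule DERIV_cmult squared_loss_has_partial_derivative[OF \<sigma>])+
    show "\<bar>indicator (cube d a b) y * risk_grad_integrand \<sigma> \<sigma>' (?\<theta> t) k y\<bar> \<le> indicator (cube d a b) y * C"
      if "\<bar>t\<bar> \<le> 1" for y t
      using C[OF that] by (simp split: split_indicator)
    have "set_integrable (leb d) (cube d a b) (\<lambda>_. C)"
      by (rule set_integrable_cube[OF a_le_b]) auto
    then show "integrable (leb d) (\<lambda>y. indicator (cube d a b) y * C)"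
      by (simp add: set_integrable_def)
    show "integrable (leb d) (\<lambda>y. indicator (cube d a b) y * ((f_ext y - net_act \<sigma> d H (?\<theta> 0) y)\<^sup>2 * p y))"
      using set_integrable_squared_loss[OF \<sigma>_cont T] by (simp add: set_integrable_def)
  qed
  then show ?thesis
    unfolding risk_act_eq_set_integral risk_grad_def set_lebesgue_integral_def by simp
qed

lemma risk_grad_tendsto:
  assumes T: "\<And>m. \<bar>\<theta> m\<bar> \<le> T"
    and lim: "\<And>x. (\<lambda>r. \<sigma>s r x) \<longlonglongrightarrow> \<sigma> x" "\<And>x. (\<lambda>r. \<sigma>s' r x) \<longlonglongrightarrow> \<sigma>' x"
    and S: "\<And>r u. \<bar>u\<bar> \<le> T + real d * (T * (\<bar>a\<bar> + \<bar>b\<bar>)) \<Longrightarrow> \<bar>\<sigma>s r u\<bar> \<le> S \<and> \<bar>\<sigma>s' r u\<bar> \<le> S"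
    and meas: "\<And>r. \<sigma>s r \<in> borel_measurable borel" "\<And>r. \<sigma>s' r \<in> borel_measurable borel"
      "\<sigma> \<in> borel_measurable borel" "\<sigma>' \<in> borel_measurable borel"
  shows "(\<lambda>r. risk_grad (\<sigma>s r) (\<sigma>s' r) \<theta> k) \<longlonglongrightarrow> risk_grad \<sigma> \<sigma>' \<theta> k"
proof -
  obtain F where F: "\<And>y. y \<in> cube d a b \<Longrightarrow> \<bar>f_ext y\<bar> \<le> F"
    using f_ext_bounded by blast
  obtain P where P: "\<And>y. y \<in> cube d a b \<Longrightarrow> \<bar>p y\<bar> \<le> P"
    using p_bound by blast
  define C where "C = 2 * (T + real H * (T * S) + F) * (1 + real H * (S + T * S * (1 + real d * (\<bar>a\<bar> + \<bar>b\<bar>)))) * P"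
  have "(\<lambda>r. LINT y|leb d. indicator (cube d a b) y * risk_grad_integrand (\<sigma>s r) (\<sigma>s' r) \<theta> k y)
      \<longlonglongrightarrow> (LINT y|leb d. indicator (cube d a b) y * risk_grad_integrand \<sigma> \<sigma>' \<theta> k y)"
  proof (rule integral_dominated_convergence[where w="\<lambda>y. indicator (cube d a b) y * C"])
    show "(\<lambda>y. indicator (cube d a b) y * risk_grad_integrand \<sigma> \<sigma>' \<theta> k y) \<in> borel_measurable (leb d)"
      using sets_leb_cube[of d a b] borel_measurable_risk_grad_integrand[OF meas(3,4)] by measurable
    show "(\<lambda>y. indicator (cube d a b) y * risk_grad_integrand (\<sigma>s r) (\<sigma>s' r) \<theta> k y) \<in> borel_measurable (leb d)"
      for r
      using sets_leb_cube[of d a b] borel_measurable_risk_grad_integrand[OF meas(1,2)] by measurable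
    have "set_integrable (leb d) (cube d a b) (\<lambda>_. C)"
      by (rule set_integrable_cube[OF a_le_b]) auto
    then show "integrable (leb d) (\<lambda>y. indicator (cube d a b) y * C)"
      by (simp add: set_integrable_def)
    show "AE y in leb d. (\<lambda>r. indicator (cube d a b) y * risk_grad_integrand (\<sigma>s r) (\<sigma>s' r) \<theta> k y)
      \<longlonglongrightarrow> indicator (cube d a b) y * risk_grad_integrand \<sigma> \<sigma>' \<theta> k y"
      by (intro AE_I2 tendsto_mult tendsto_const risk_grad_integrand_tendsto lim)
    show "AE y in leb d. norm (indicator (cube d a b) y * risk_grad_integrand (\<sigma>s r) (\<sigma>s' r) \<theta> k y)
      \<le> indicator (cube d a b) y * C" for r
      using abs_risk_grad_integrand_le[OF T _ S F P] unfolding C_def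
      by (intro AE_I2) (simp split: split_indicator)
  qed
  then show ?thesis
    unfolding risk_grad_def set_lebesgue_integral_def by simp
qed

lemma abs_diff_set_integral_weighted_le:
  assumes g1: "g1 \<in> borel_measurable (leb d)" and g2: "g2 \<in> borel_measurable (leb d)"
    and B: "\<And>y. y \<in> cube d a b \<Longrightarrow> \<bar>g1 y\<bar> \<le> B \<and> \<bar>g2 y\<bar> \<le> B"
    and e: "set_integrable (leb d) (cube d a b) e"
    and diff: "\<And>y. y \<in> cube d a b \<Longrightarrow> \<bar>g1 y - g2 y\<bar> \<le> e y"
    and P: "\<And>y. y \<in> cube d a b \<Longrightarrow> \<bar>p y\<bar> \<le> P"
  shows "\<bar>(LINT y:cube d a b|leb d. g1 y * p y) - (LINT y:cube d a b|leb d. g2 y * p y)\<bar>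
    \<le> P * (LINT y:cube d a b|leb d. e y)"
proof -
  have int: "set_integrable (leb d) (cube d a b) (\<lambda>y. g y * p y)"
    if "g \<in> borel_measurable (leb d)" "\<And>y. y \<in> cube d a b \<Longrightarrow> \<bar>g y\<bar> \<le> B" for g
    using that P p_meas by (intro set_integrable_cube[OF a_le_b, where B="B * P"]) (auto intro: abs_mult_le_mult)
  have int1: "set_integrable (leb d) (cube d a b) (\<lambda>y. g1 y * p y)"
    using B by (intro int g1) blast
  have int2: "set_integrable (leb d) (cube d a b) (\<lambda>y. g2 y * p y)"
    using B by (intro int g2) blast
  have "\<bar>(LINT y:cube d a b|leb d. g1 y * p y) - (LINT y:cube d a b|leb d. g2 y * p y)\<bar>
      = \<bar>LINT y:cube d a b|leb d. g1 y * p y - g2 y * p y\<bar>"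
    using int1 int2 by (simp add: set_integral_diff)
  also have "\<dots> \<le> (LINT y:cube d a b|leb d. \<bar>g1 y * p y - g2 y * p y\<bar>)"
    using set_integral_norm_bound[OF set_integral_diff(1)[OF int1 int2]] by simp
  also have "\<dots> \<le> (LINT y:cube d a b|leb d. P * e y)"
  proof (rule set_integral_mono)
    show "set_integrable (leb d) (cube d a b) (\<lambda>y. \<bar>g1 y * p y - g2 y * p y\<bar>)"
      using set_integrable_abs[OF set_integral_diff(1)[OF int1 int2]] .
    show "set_integrable (leb d) (cube d a b) (\<lambda>y. P * e y)"
      using e by simp
    show "\<bar>g1 y * p y - g2 y * p y\<bar> \<le> P * e y" if "y \<in> cube d a b" for y
      using abs_mult_le_mult[OF P diff, OF that that] by (simp add: algebra_simps)
  qed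
  also have "\<dots> = P * (LINT y:cube d a b|leb d. e y)"
    by simp
  finally show ?thesis .
qed

lemma lipschitz_near_set_integral:
  assumes "0 < \<epsilon>" and U: "unif_lipschitz_bounded (pnorm_dist d H) (pball d H \<theta>0 \<epsilon>) (cube d a b) h"
    and meas: "\<And>\<theta>. h \<theta> \<in> borel_measurable (leb d)"
  shows "lipschitz_near d H (\<lambda>\<theta>. LINT y:cube d a b|leb d. h \<theta> y * p y) \<theta>0"
proof -
  obtain L M where L: "\<forall>\<theta>1\<in>pball d H \<theta>0 \<epsilon>. \<forall>\<theta>2\<in>pball d H \<theta>0 \<epsilon>. \<forall>y\<in>cube d a b.
      \<bar>h \<theta>1 y - h \<theta>2 y\<bar> \<le> L * pnorm_dist d H \<theta>1 \<theta>2"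
    and M: "\<forall>\<theta>\<in>pball d H \<theta>0 \<epsilon>. \<forall>y\<in>cube d a b. \<bar>h \<theta> y\<bar> \<le> M"
    using U unfolding unif_lipschitz_bounded_def by blast
  obtain P where P: "\<And>y. y \<in> cube d a b \<Longrightarrow> \<bar>p y\<bar> \<le> P"
    using p_bound by blast
  have "\<bar>(LINT y:cube d a b|leb d. h \<theta>1 y * p y) - (LINT y:cube d a b|leb d. h \<theta>2 y * p y)\<bar>
      \<le> P * L * (b - a) ^ d * pnorm_dist d H \<theta>1 \<theta>2"
    if "\<theta>1 \<in> pball d H \<theta>0 \<epsilon>" "\<theta>2 \<in> pball d H \<theta>0 \<epsilon>" for \<theta>1 \<theta>2
  proof -
    have "\<bar>(LINT y:cube d a b|leb d. h \<theta>1 y * p y) - (LINT y:cube d a b|leb d. h \<theta>2 y * p y)\<bar>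
        \<le> P * (LINT y:cube d a b|leb d. L * pnorm_dist d H \<theta>1 \<theta>2)"
    proof (rule abs_diff_set_integral_weighted_le[OF meas meas _ _ _ P])
      show "set_integrable (leb d) (cube d a b) (\<lambda>y. L * pnorm_dist d H \<theta>1 \<theta>2)"
        by (rule set_integrable_cube[OF a_le_b]) auto
    qed (use L M that in auto)
    also have "\<dots> = P * L * (b - a) ^ d * pnorm_dist d H \<theta>1 \<theta>2"
      using sets_leb_cube emeasure_leb_cube[OF a_le_b] measure_leb_cube[OF a_le_b]
      by (simp add: set_integral_const)
    finally show ?thesis .
  qed
  then show ?thesis
    unfolding lipschitz_near_def using \<open>0 < \<epsilon>\<close> by blast
qed

lemma abs_diff_set_integral_indicator_preact_le:
  fixes i :: nat
  assumes meas: "A1 \<in> borel_measurable (leb d)" "A2 \<in> borel_measurable (leb d)"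
    and A: "\<And>y. y \<in> cube d a b \<Longrightarrow> \<bar>A1 y - A2 y\<bar> \<le> L \<and> \<bar>A1 y\<bar> \<le> M \<and> \<bar>A2 y\<bar> \<le> M"
    and P: "\<And>y. y \<in> cube d a b \<Longrightarrow> \<bar>p y\<bar> \<le> P"
  defines "I \<equiv> \<lambda>\<theta> y. indicat_real {0<..} (preact d H \<theta> i y)"
  shows "\<bar>(LINT y:cube d a b|leb d. A1 y * I \<theta>1 y * p y) - (LINT y:cube d a b|leb d. A2 y * I \<theta>2 y * p y)\<bar>
    \<le> P * (L * (b - a) ^ d + M * (LINT y:cube d a b|leb d. \<bar>I \<theta>1 y - I \<theta>2 y\<bar>))"
proof -
  have int_c: "set_integrable (leb d) (cube d a b) (\<lambda>y. L)"
    by (rule set_integrable_cube[OF a_le_b]) auto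
  have int_MI: "set_integrable (leb d) (cube d a b) (\<lambda>y. M * \<bar>I \<theta>1 y - I \<theta>2 y\<bar>)"
    unfolding I_def using set_integrable_indicator_preact_diff[OF a_le_b] by simp
  have "\<bar>(LINT y:cube d a b|leb d. A1 y * I \<theta>1 y * p y) - (LINT y:cube d a b|leb d. A2 y * I \<theta>2 y * p y)\<bar>
      \<le> P * (LINT y:cube d a b|leb d. L + M * \<bar>I \<theta>1 y - I \<theta>2 y\<bar>)"
  proof (rule abs_diff_set_integral_weighted_le[where B=M, OF _ _ _ set_integral_add(1)[OF int_c int_MI] _ P])
    show "(\<lambda>y. A1 y * I \<theta>1 y) \<in> borel_measurable (leb d)"
      unfolding I_def using meas(1) borel_measurable_indicator_preact by measurable
    show "(\<lambda>y. A2 y * I \<theta>2 y) \<in> borel_measurable (leb d)"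
      unfolding I_def using meas(2) borel_measurable_indicator_preact by measurable
    fix y assume y: "y \<in> cube d a b"
    then show "\<bar>A1 y * I \<theta>1 y\<bar> \<le> M \<and> \<bar>A2 y * I \<theta>2 y\<bar> \<le> M"
      using A[OF y] by (auto simp: I_def abs_mult indicator_def)
    have "\<bar>I \<theta>1 y * A1 y - I \<theta>2 y * A2 y\<bar> \<le> 1 * L + M * \<bar>I \<theta>1 y - I \<theta>2 y\<bar>"
      by (rule abs_diff_mult_le) (use A[OF y] in \<open>auto simp: I_def indicator_def\<close>)
    then show "\<bar>A1 y * I \<theta>1 y - A2 y * I \<theta>2 y\<bar> \<le> L + M * \<bar>I \<theta>1 y - I \<theta>2 y\<bar>"
      by (simp add: mult.commute)
  qed
  also have "\<dots> = P * (L * (b - a) ^ d + M * (LINT y:cube d a b|leb d. \<bar>I \<theta>1 y - I \<theta>2 y\<bar>))"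
    using set_integral_add(2)[OF int_c int_MI] sets_leb_cube emeasure_leb_cube[OF a_le_b]
      measure_leb_cube[OF a_le_b] set_integrable_indicator_preact_diff[OF a_le_b]
    by (simp add: set_integral_const mult.commute I_def)
  finally show ?thesis .
qed

lemma lipschitz_near_set_integral_indicator_preact:
  assumes U: "\<And>\<epsilon>. unif_lipschitz_bounded (pnorm_dist d H) (pball d H \<theta>0 \<epsilon>) (cube d a b) A"
    and meas: "\<And>\<theta>. A \<theta> \<in> borel_measurable (leb d)"
    and i: "i \<in> {1..H}" and nd: "i \<notin> degenerate d H \<theta>0"
  shows "lipschitz_near d H
    (\<lambda>\<theta>. LINT y:cube d a b|leb d. A \<theta> y * indicat_real {0<..} (preact d H \<theta> i y) * p y) \<theta>0"
proof -
  let ?I = "\<lambda>\<theta> y. indicat_real {0<..} (preact d H \<theta> i y)"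
  obtain \<epsilon> K where "0 < \<epsilon>" and K: "\<forall>\<theta>1\<in>pball d H \<theta>0 \<epsilon>. \<forall>\<theta>2\<in>pball d H \<theta>0 \<epsilon>.
      (LINT y:cube d a b|leb d. \<bar>?I \<theta>1 y - ?I \<theta>2 y\<bar>) \<le> K * pnorm_dist d H \<theta>1 \<theta>2"
    using set_integral_indicator_preact_diff_le[OF a_le_b i nd] by blast
  obtain L M where L: "\<forall>\<theta>1\<in>pball d H \<theta>0 \<epsilon>. \<forall>\<theta>2\<in>pball d H \<theta>0 \<epsilon>. \<forall>y\<in>cube d a b.
      \<bar>A \<theta>1 y - A \<theta>2 y\<bar> \<le> L * pnorm_dist d H \<theta>1 \<theta>2"
    and M: "\<forall>\<theta>\<in>pball d H \<theta>0 \<epsilon>. \<forall>y\<in>cube d a b. \<bar>A \<theta> y\<bar> \<le> M"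
    using U[of \<epsilon>] unfolding unif_lipschitz_bounded_def by blast
  obtain P where P: "\<And>y. y \<in> cube d a b \<Longrightarrow> \<bar>p y\<bar> \<le> P"
    using p_bound by blast
  have "\<bar>(LINT y:cube d a b|leb d. A \<theta>1 y * ?I \<theta>1 y * p y) - (LINT y:cube d a b|leb d. A \<theta>2 y * ?I \<theta>2 y * p y)\<bar>
      \<le> P * (L * (b - a) ^ d + M * K) * pnorm_dist d H \<theta>1 \<theta>2"
    if \<theta>: "\<theta>1 \<in> pball d H \<theta>0 \<epsilon>" "\<theta>2 \<in> pball d H \<theta>0 \<epsilon>" for \<theta>1 \<theta>2
  proof -
    let ?\<delta> = "pnorm_dist d H \<theta>1 \<theta>2"
    have P0: "0 \<le> P" and M0: "0 \<le> M"
      using P[of "cube_clamp d a b undefined"] M \<theta> cube_clamp_in_cube[OF a_le_b] by force+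
    have "\<bar>(LINT y:cube d a b|leb d. A \<theta>1 y * ?I \<theta>1 y * p y) - (LINT y:cube d a b|leb d. A \<theta>2 y * ?I \<theta>2 y * p y)\<bar>
        \<le> P * (L * ?\<delta> * (b - a) ^ d + M * (LINT y:cube d a b|leb d. \<bar>?I \<theta>1 y - ?I \<theta>2 y\<bar>))"
      using L M \<theta> by (intro abs_diff_set_integral_indicator_preact_le[OF meas meas _ P]) auto
    also have "\<dots> \<le> P * (L * ?\<delta> * (b - a) ^ d + M * (K * ?\<delta>))"
      using K \<theta> P0 M0 by (intro mult_left_mono add_left_mono) auto
    finally show ?thesis
      by (simp add: algebra_simps)
  qed
  then show ?thesis
    unfolding lipschitz_near_def using \<open>0 < \<epsilon>\<close> by blast
qed
lemma unif_lipschitz_bounded_f_ext: "unif_lipschitz_bounded \<delta> U (cube d a b) (\<lambda>\<theta> y. f_ext y)"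
  using f_ext_bounded unif_lipschitz_bounded_const by metis

lemma lipschitz_near_relu_risk_grad_outer:
  assumes "H * d + H < k"
  shows "lipschitz_near d H (\<lambda>\<theta>. relu_risk_grad \<theta> k) \<theta>0"
  unfolding risk_grad_def risk_grad_integrand_def
proof (rule lipschitz_near_set_integral[where \<epsilon>=1])
  show "unif_lipschitz_bounded (pnorm_dist d H) (pball d H \<theta>0 1) (cube d a b)
    (\<lambda>\<theta> y. 2 * (net_act (\<lambda>x. max x 0) d H \<theta> y - f_ext y)
      * net_act_partial (\<lambda>x. max x 0) (indicat_real {0<..}) d H \<theta> k y)"
    unfolding net_act_partial_outer[OF assms]
    by (intro unif_lipschitz_bounded_mult unif_lipschitz_bounded_constant unif_lipschitz_bounded_diff
        unif_lipschitz_bounded_relu_net unif_lipschitz_bounded_f_ext unif_lipschitz_bounded_add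
        unif_lipschitz_bounded_sum unif_lipschitz_bounded_max_0 unif_lipschitz_bounded_preact) auto
  show "(\<lambda>y. 2 * (net_act (\<lambda>x. max x 0) d H \<theta> y - f_ext y)
      * net_act_partial (\<lambda>x. max x 0) (indicat_real {0<..}) d H \<theta> k y) \<in> borel_measurable (leb d)" for \<theta>
    using borel_measurable_f_ext borel_measurable_net_act[of "\<lambda>x. max x 0"]
      borel_measurable_net_act_partial[of "\<lambda>x. max x 0" "indicat_real {0<..}"] by measurable
qed simp

lemma lipschitz_near_relu_risk_grad_inner:
  assumes i: "i \<in> {1..H}" and nd: "i \<notin> degenerate d H \<theta>0"
    and q: "\<And>y. y \<in> cube d a b \<Longrightarrow> \<bar>q y\<bar> \<le> Q" "q \<in> borel_measurable (leb d)"
    and partial: "\<And>\<theta> y. net_act_partial (\<lambda>x. max x 0) (indicat_real {0<..}) d H \<theta> k y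
      = outw d H \<theta> i * indicat_real {0<..} (preact d H \<theta> i y) * q y"
  shows "lipschitz_near d H (\<lambda>\<theta>. relu_risk_grad \<theta> k) \<theta>0"
proof -
  define A where "A \<theta> y = 2 * (net_act (\<lambda>x. max x 0) d H \<theta> y - f_ext y) * outw d H \<theta> i * q y" for \<theta> y
  have "unif_lipschitz_bounded (pnorm_dist d H) (pball d H \<theta>0 \<epsilon>) (cube d a b) A" for \<epsilon>
    unfolding A_def outw_def
    by (intro unif_lipschitz_bounded_mult unif_lipschitz_bounded_constant unif_lipschitz_bounded_diff
        unif_lipschitz_bounded_relu_net unif_lipschitz_bounded_f_ext unif_lipschitz_bounded_coord
        outw_index_mem[OF i] unif_lipschitz_bounded_const[OF q(1)])
  moreover have "A \<theta> \<in> borel_measurable (leb d)" for \<theta>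
    unfolding A_def using borel_measurable_f_ext borel_measurable_net_act[of "\<lambda>x. max x 0"] q(2)
    by measurable
  moreover have "relu_risk_grad \<theta> k
      = (LINT y:cube d a b|leb d. A \<theta> y * indicat_real {0<..} (preact d H \<theta> i y) * p y)" for \<theta>
    unfolding risk_grad_def risk_grad_integrand_def A_def partial by (simp add: mult_ac)
  ultimately show ?thesis
    using lipschitz_near_set_integral_indicator_preact[OF _ _ i nd] by presburger
qed

lemma lipschitz_near_relu_risk_grad_weight:
  assumes "i \<in> {1..H}" "j \<in> {1..d}" "i \<notin> degenerate d H \<theta>0"
  shows "lipschitz_near d H (\<lambda>\<theta>. relu_risk_grad \<theta> ((i - 1) * d + j)) \<theta>0"
  using assms abs_cube_coord_le borel_measurable_leb_coord net_act_partial_weight[OF assms(1,2)]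
  by (intro lipschitz_near_relu_risk_grad_inner[where q="\<lambda>y. y j" and Q="\<bar>a\<bar> + \<bar>b\<bar>"]) auto

lemma lipschitz_near_relu_risk_grad_bias:
  assumes "i \<in> {1..H}" "i \<notin> degenerate d H \<theta>0"
  shows "lipschitz_near d H (\<lambda>\<theta>. relu_risk_grad \<theta> (H * d + i)) \<theta>0"
  using assms net_act_partial_bias[OF assms(1)]
  by (intro lipschitz_near_relu_risk_grad_inner[where q="\<lambda>_. 1" and Q=1]) auto

lemma risk_grad_tendsto_relu_risk_grad:
  assumes der: "\<forall>r\<ge>1. \<forall>x. (R r has_real_derivative R' r x) (at x)"
    and R'_cont: "\<forall>r\<ge>1. continuous_on UNIV (R' r)"
    and lim: "\<forall>x. (\<lambda>r. \<bar>R r x - max x 0\<bar> + \<bar>R' r x - indicator {0<..} x\<bar>) \<longlonglongrightarrow> 0"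
    and R'_bound: "\<forall>x. \<exists>C. \<forall>r\<ge>1. \<forall>y\<in>{-\<bar>x\<bar>..\<bar>x\<bar>}. \<bar>R' r y\<bar> \<le> C"
    and T: "\<And>m. \<bar>\<theta> m\<bar> \<le> T"
  shows "(\<lambda>r. risk_grad (R r) (R' r) \<theta> k) \<longlonglongrightarrow> relu_risk_grad \<theta> k"
proof -
  obtain S where S: "\<And>r u. \<bar>u\<bar> \<le> T + real d * (T * (\<bar>a\<bar> + \<bar>b\<bar>)) \<Longrightarrow> \<bar>R (Suc r) u\<bar> \<le> S \<and> \<bar>R' (Suc r) u\<bar> \<le> S"
    by (rule relu_approx_uniformly_bounded[OF der relu_approx_tendsto(1)[OF lim] R'_bound]) (rule that)
  have "(\<lambda>r. risk_grad (R (Suc r)) (R' (Suc r)) \<theta> k) \<longlonglongrightarrow> relu_risk_grad \<theta> k"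
  proof (rule risk_grad_tendsto[OF T _ _ S])
    show "(\<lambda>r. R (Suc r) x) \<longlonglongrightarrow> max x 0" "(\<lambda>r. R' (Suc r) x) \<longlonglongrightarrow> indicat_real {0<..} x" for x
      using relu_approx_tendsto[OF lim] by (auto intro: LIMSEQ_Suc)
    show "R (Suc r) \<in> borel_measurable borel" for r
      using der by (auto intro!: borel_measurable_continuous_onI continuous_at_imp_continuous_on DERIV_isCont)
    show "R' (Suc r) \<in> borel_measurable borel" for r
      using R'_cont by (simp add: borel_measurable_continuous_onI)
    show "(\<lambda>x::real. max x 0) \<in> borel_measurable borel"
      by measurable
    show "indicat_real {0::real<..} \<in> borel_measurable borel"
      by (intro borel_measurable_indicator) simp
  qed
  then show ?thesis
    by (rule LIMSEQ_imp_Suc)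
qed

lemma gradient_limit_eq_relu_risk_grad:
  assumes der: "\<forall>r\<ge>1. \<forall>x. (R r has_real_derivative R' r x) (at x)"
    and R'_cont: "\<forall>r\<ge>1. continuous_on UNIV (R' r)"
    and lim: "\<forall>x. (\<lambda>r. \<bar>R r x - max x 0\<bar> + \<bar>R' r x - indicator {0<..} x\<bar>) \<longlonglongrightarrow> 0"
    and R'_bound: "\<forall>x. \<exists>C. \<forall>r\<ge>1. \<forall>y\<in>{-\<bar>x\<bar>..\<bar>x\<bar>}. \<bar>R' r y\<bar> \<le> C"
    and G: "\<forall>\<theta>\<in>param_space d H. \<forall>D g.
           ((\<forall>r\<ge>1. \<forall>k\<in>{1..pdim d H}.
               ((\<lambda>t. risk_act (R r) d H a b f p (\<theta>(k := \<theta> k + t))) has_real_derivative D r k) (at 0))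
            \<and> (\<forall>k\<in>{1..pdim d H}. (\<lambda>r. D r k) \<longlonglongrightarrow> g k))
           \<longrightarrow> (\<forall>k\<in>{1..pdim d H}. G \<theta> k = g k)"
    and \<theta>: "\<theta> \<in> param_space d H" and k: "k \<in> {1..pdim d H}"
  shows "G \<theta> k = relu_risk_grad \<theta> k"
proof -
  obtain T where T: "\<And>m. \<bar>\<theta> m\<bar> \<le> T"
    using param_space_bounded[OF \<theta>] by blast
  have "\<forall>r\<ge>1. \<forall>k\<in>{1..pdim d H}.
      ((\<lambda>t. risk_act (R r) d H a b f p (\<theta>(k := \<theta> k + t))) has_real_derivative risk_grad (R r) (R' r) \<theta> k) (at 0)"
    using der R'_cont by (auto intro: risk_act_has_partial_derivative[where \<theta>=\<theta> and T=T, OF _ _ T])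
  moreover have "\<forall>k\<in>{1..pdim d H}. (\<lambda>r. risk_grad (R r) (R' r) \<theta> k) \<longlonglongrightarrow> relu_risk_grad \<theta> k"
    using risk_grad_tendsto_relu_risk_grad[OF der R'_cont lim R'_bound, of \<theta> T] T by blast
  ultimately show ?thesis
    by (rule G[rule_format, OF \<theta> conjI k])
qed

end

theorem corollary2p7:
  fixes d H :: nat and a b :: real
    and f p :: "(nat \<Rightarrow> real) \<Rightarrow> real"
    and R R' :: "nat \<Rightarrow> real \<Rightarrow> real"
    and G :: "(nat \<Rightarrow> real) \<Rightarrow> nat \<Rightarrow> real"
  assumes "d \<ge> 1" and "H \<ge> 1" and "a < b"
    and "continuous_on (cube d a b) f"
    and "p \<in> borel_measurable (leb d)"
    and "\<forall>x\<in>cube d a b. 0 \<le> p x"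
    and "bounded (p ` cube d a b)"
    and "\<forall>r\<ge>1. \<forall>x. (R r has_real_derivative R' r x) (at x)"
    and "\<forall>r\<ge>1. continuous_on UNIV (R' r)"
    and "\<forall>x. (\<lambda>r. \<bar>R r x - max x 0\<bar> + \<bar>R' r x - indicator {0<..} x\<bar>) \<longlonglongrightarrow> 0"
    and "\<forall>x. \<exists>C. \<forall>r\<ge>1. \<forall>y\<in>{-\<bar>x\<bar>..\<bar>x\<bar>}. \<bar>R' r y\<bar> \<le> C"
    and "\<forall>\<theta>\<in>param_space d H. \<forall>D g.
           ((\<forall>r\<ge>1. \<forall>k\<in>{1..pdim d H}.
               ((\<lambda>t. risk_act (R r) d H a b f p (\<theta>(k := \<theta> k + t))) has_real_derivative D r k) (at 0))
            \<and> (\<forall>k\<in>{1..pdim d H}. (\<lambda>r. D r k) \<longlonglongrightarrow> g k))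
           \<longrightarrow> (\<forall>k\<in>{1..pdim d H}. G \<theta> k = g k)"
  shows "(\<forall>k. H * d + H < k \<and> k \<le> pdim d H \<longrightarrow>
            loc_lipschitz d H (param_space d H) (\<lambda>\<theta>. G \<theta> k))
       \<and> (\<forall>i\<in>{1..H}. \<forall>j\<in>{1..d}.
            loc_lipschitz d H {\<theta>\<in>param_space d H. i \<notin> degenerate d H \<theta>}
              (\<lambda>\<theta>. G \<theta> ((i - 1) * d + j)))
       \<and> (\<forall>i\<in>{1..H}.
            loc_lipschitz d H {\<theta>\<in>param_space d H. i \<notin> degenerate d H \<theta>}
              (\<lambda>\<theta>. G \<theta> (H * d + i)))"
proof -
  interpret risk_setting d H a b f p
    using assms by unfold_locales auto
  have G_eq: "G \<theta> k = relu_risk_grad \<theta> k" if "\<theta> \<in> param_space d H" "k \<in> {1..pdim d H}" for \<theta> k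
    using gradient_limit_eq_relu_risk_grad[OF assms(8-12) that] .
  show ?thesis
  proof (intro conjI allI impI ballI)
    fix k assume "H * d + H < k \<and> k \<le> pdim d H"
    then show "loc_lipschitz d H (param_space d H) (\<lambda>\<theta>. G \<theta> k)"
      using G_eq lipschitz_near_relu_risk_grad_outer by (intro loc_lipschitzI) auto
  next
    fix i j assume "i \<in> {1..H}" "j \<in> {1..d}"
    then show "loc_lipschitz d H {\<theta> \<in> param_space d H. i \<notin> degenerate d H \<theta>} (\<lambda>\<theta>. G \<theta> ((i - 1) * d + j))"
      using G_eq weight_index_mem lipschitz_near_relu_risk_grad_weight by (intro loc_lipschitzI) auto
  next
    fix i assume "i \<in> {1..H}"
    then show "loc_lipschitz d H {\<theta> \<in> param_space d H. i \<notin> degenerate d H \<theta>} (\<lambda>\<theta>. G \<theta> (H * d + i))"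
      using G_eq bias_index_mem lipschitz_near_relu_risk_grad_bias by (intro loc_lipschitzI) auto
  qed
qed

end
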